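(* Let $\varphi:\mathbb{N}\to\mathbb{C}$ satisfy $|\varphi(m)|\leq 1$ for all $m$. For all real $\alpha\geq 1$, $\beta\geq 0$, $K\geq 0$ and $H\geq 1$, \[ \left|\sum_{0<n\leq K}\varphi\bigl(\lfloor n\alpha+\beta\rfloor\bigr)-\frac 1\alpha\sum_{\beta<m\leq \beta+K\alpha}\varphi(m)\right| \leq \sum_{1\leq |h|\leq H}\min\left\{\frac 1\alpha,\frac 1{|h|}\right\}\left|\sum_{\beta<m\leq\beta+K\alpha}\varphi(m)\,e\!\left(-m\frac h\alpha\right)\right| +\frac 1H\sum_{0\leq|h|\leq H}\left|\sum_{\beta<m\leq\beta+K\alpha}e\!\left(-m\frac h\alpha\right)\right|+O(1), \] where the implied constant is absolute.
   Context: $e(x)=e^{2\pi i x}$; $\lfloor\cdot\rfloor$ is the floor function; $\mathbb{N}$ denotes the nonnegative integers; sums over $n,m,h$ range over integers in the indicated ranges. *)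

theory Defs
  imports Complex_Main
begin

definition e :: "real \<Rightarrow> complex" where
  "e x = exp (2 * of_real pi * \<i> * of_real x)"

end

(*
  Put x_m = (beta - m) / alpha.  For alpha >= 1 the integer floor x_m - floor (x_m - 1/alpha)
  is 1 exactly when m is a value floor (n alpha + beta), so up to one boundary term the sum
  over the Beatty sequence is the sum of phi m (1/alpha + s (x_m - 1/alpha) - s x_m), where
  s t = t - floor t - 1/2 is the sawtooth.  Replacing s by Vaaler's trigonometric polynomial
  V_N with N = floor H costs at most the Fejer kernel F_N over 2 (N + 1) at each point; the
  coefficients of F_N lie in [0, 1], which gives the second sum, while the coefficients of V_N
  are at most 1 / (2 pi |h|), and multiplied by |e (-h/alpha) - 1| <= min (2 pi |h| / alpha) 2
  they give the weights min (1/alpha) (1/|h|) of the first sum.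

  Vaaler's bound |s x - V_N x| <= F_N x / (2 (N + 1)) comes from the partial fraction
  expansions of pi cot (pi z) and (pi / sin (pi z))^2: with L = N + 1 and y = L x, the sum
  sum_j floor (j / L) / (y - j)^2 + sum_n 1 / (y - n L) lies between 0 and
  sum_n 1 / (y - n L)^2 (group j into blocks of length L and telescope), and evaluating both
  sides in closed form turns these bounds into Vaaler's inequality.
*)
theory Submission
  imports Defs "HOL-Analysis.Analysis" "HOL-Real_Asymp.Real_Asymp"
begin

section \<open>Partial fractions for the cotangent and the cosecant squared\<close>

lemma rGamma_reflection_real: "rGamma (x::real) * rGamma (1 - x) = sin (pi * x) / pi"
proof -
  have "complex_of_real (rGamma x * rGamma (1 - x)) = rGamma (of_real x) * rGamma (1 - of_real x)"
    by (simp add: rGamma_complex_of_real[symmetric])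
  also have "\<dots> = sin (of_real pi * of_real x) / of_real pi" by (rule rGamma_reflection_complex)
  also have "\<dots> = complex_of_real (sin (pi * x) / pi)" by (simp add: sin_of_real[symmetric])
  finally show ?thesis by (simp only: of_real_eq_iff)
qed

lemma sin_pi_times_nonzero: "(x::real) \<notin> \<int> \<Longrightarrow> sin (pi * x) \<noteq> 0"
  by (subst mult.commute) (simp add: sin_times_pi_eq_0)

lemma one_minus_not_Ints: "(x::real) \<notin> \<int> \<Longrightarrow> 1 - x \<notin> \<int>"
  using Ints_diff[OF Ints_1, of "1 - x"] by auto

lemma not_Ints_reflection_not_nonpos_Ints:
  "(x::real) \<notin> \<int> \<Longrightarrow> x \<notin> \<int>\<^sub>\<le>\<^sub>0 \<and> 1 - x \<notin> \<int>\<^sub>\<le>\<^sub>0"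
  using one_minus_not_Ints nonpos_Ints_subset_Ints by blast

text \<open>The reflection formulas for \<open>Digamma\<close> and \<open>Polygamma 1\<close> are the logarithmic
  derivatives of that for \<open>rGamma\<close>.\<close>

lemma Digamma_reflection_real:
  assumes x: "(x::real) \<notin> \<int>"
  shows "Digamma (1 - x) - Digamma x = pi * cot (pi * x)"
proof -
  have x1: "x \<notin> \<int>\<^sub>\<le>\<^sub>0" "1 - x \<notin> \<int>\<^sub>\<le>\<^sub>0" using not_Ints_reflection_not_nonpos_Ints[OF x] by auto
  have "((\<lambda>x. rGamma x * rGamma (1 - x)) has_field_derivative
      (- rGamma x * Digamma x) * rGamma (1 - x)
          + rGamma x * ((- rGamma (1-x) * Digamma (1-x)) * (-1))) (at x)"
    using x1
    by (auto intro!: derivative_eq_intros has_field_derivative_rGamma_no_nonpos_int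
           DERIV_chain2[OF has_field_derivative_rGamma_no_nonpos_int])
  moreover have "((\<lambda>x. rGamma x * rGamma (1 - x)) has_field_derivative cos (pi * x)) (at x)"
    unfolding rGamma_reflection_real by (auto intro!: derivative_eq_intros)
  ultimately have "(- rGamma x * Digamma x) * rGamma (1 - x)
      + rGamma x * ((- rGamma (1-x) * Digamma (1-x)) * (-1))
      = cos (pi * x)" by (rule DERIV_unique)
  then have "(rGamma x * rGamma (1 - x)) * (Digamma (1 - x) - Digamma x) = cos (pi * x)"
    by (simp add: algebra_simps)
  then have "sin (pi * x) / pi * (Digamma (1 - x) - Digamma x) = cos (pi * x)"
    by (simp only: rGamma_reflection_real)
  then show ?thesis using sin_pi_times_nonzero[OF x] by (simp add: cot_def field_simps)
qed

lemma Polygamma_1_reflection_real: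
  assumes x: "(x::real) \<notin> \<int>"
  shows "Polygamma 1 x + Polygamma 1 (1 - x) = (pi / sin (pi * x))^2"
proof -
  have x1: "x \<notin> \<int>\<^sub>\<le>\<^sub>0" "1 - x \<notin> \<int>\<^sub>\<le>\<^sub>0" using not_Ints_reflection_not_nonpos_Ints[OF x] by auto
  have sx: "sin (pi * x) \<noteq> 0" using sin_pi_times_nonzero[OF x] .
  have "((\<lambda>x. Digamma (1 - x) - Digamma x) has_field_derivative
      Polygamma 1 (1 - x) * (-1) - Polygamma 1 x) (at x)"
    using x1
    by (auto intro!: derivative_eq_intros has_field_derivative_Polygamma
           DERIV_chain2[OF has_field_derivative_Polygamma])
  moreover have "((\<lambda>x. Digamma (1 - x) - Digamma x) has_field_derivative
      pi * (((- sin (pi * x) * pi) * sin (pi * x) - cos (pi * x) * (cos (pi * x) * pi))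
        / (sin (pi * x) * sin (pi * x)))) (at x)"
  proof (rule has_field_derivative_transform_within_open)
    show "((\<lambda>x. pi * (cos (pi * x) / sin (pi * x))) has_field_derivative
      pi * (((- sin (pi * x) * pi) * sin (pi * x) - cos (pi * x) * (cos (pi * x) * pi))
        / (sin (pi * x) * sin (pi * x)))) (at x)"
      using sx by (intro DERIV_cmult DERIV_divide) (auto intro!: derivative_eq_intros)
    show "open (- \<int> :: real set)" "x \<in> - \<int>" using x by auto
    show "pi * (cos (pi * t) / sin (pi * t)) = Digamma (1 - t) - Digamma t" if "t \<in> - \<int>" for t
      using Digamma_reflection_real[of t] that by (simp add: cot_def)
  qed
  ultimately have "Polygamma 1 (1 - x) * (-1) - Polygamma 1 x =
      pi * (((- sin (pi * x) * pi) * sin (pi * x) - cos (pi * x) * (cos (pi * x) * pi))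
        / (sin (pi * x) * sin (pi * x)))"
    by (rule DERIV_unique)
  also have "\<dots> = - (pi * pi) / (sin (pi * x) * sin (pi * x))"
  proof -
    have "(- sin (pi * x) * pi) * sin (pi * x) - cos (pi * x) * (cos (pi * x) * pi)
        = - pi * ((sin (pi * x))\<^sup>2 + (cos (pi * x))\<^sup>2)"
      by (simp only: power2_eq_square) algebra
    then show ?thesis by (simp only: sin_cos_squared_add) simp
  qed
  finally show ?thesis by (simp add: power2_eq_square)
qed

lemma sum_symmetric_int_split:
  "(\<Sum>n\<in>{- int (Suc M)..<int (Suc M)}. f n) = (\<Sum>m<Suc (Suc M). f (- int m)) + (\<Sum>m<M. f (int m + 1))"
proof (induction M)
  case 0
  have "{- int (Suc 0)..<int (Suc 0)} = {-1, 0}" by auto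
  then show ?case by (simp add: numeral_2_eq_2 add.commute)
next
  case (Suc M)
  have "{- int (Suc (Suc M))..<int (Suc (Suc M))} =
      insert (- int (Suc M) - 1) (insert (int (Suc M)) {- int (Suc M)..<int (Suc M)})"
    by auto
  then show ?case using Suc by (simp add: algebra_simps)
qed

lemma partial_fractions_sin_squared:
  assumes z: "(z::real) \<notin> \<int>"
  shows "(\<lambda>M. \<Sum>n\<in>{- int M..<int M}. 1 / (z - of_int n)^2) \<longlonglongrightarrow> (pi / sin (pi * z))^2"
proof -
  have z0: "z \<noteq> 0" "1 - z \<noteq> 0" using z by auto
  have Polygamma_1: "Polygamma 1 a = (\<Sum>k. inverse ((a + of_nat k)^2))" for a :: real
    by (simp add: Polygamma_def power2_eq_square)
  have "(\<lambda>M. \<Sum>m<Suc (Suc M). inverse ((z + of_nat m)^2)) \<longlonglongrightarrow> Polygamma 1 z"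
    unfolding Polygamma_1 using summable_LIMSEQ[OF Polygamma_converges'[OF z0(1), of 2]]
    by (intro LIMSEQ_Suc) simp
  moreover have "(\<lambda>M. \<Sum>m<M. inverse (((1 - z) + of_nat m)^2)) \<longlonglongrightarrow> Polygamma 1 (1 - z)"
    unfolding Polygamma_1 using summable_LIMSEQ[OF Polygamma_converges'[OF z0(2), of 2]] by simp
  moreover have "(\<Sum>n\<in>{- int (Suc M)..<int (Suc M)}. 1 / (z - of_int n)^2) =
      (\<Sum>m<Suc (Suc M). inverse ((z + of_nat m)^2)) + (\<Sum>m<M. inverse (((1 - z) + of_nat m)^2))" for M
    unfolding sum_symmetric_int_split
    by (intro arg_cong2[where f="(+)"] sum.cong)
       (auto simp: inverse_eq_divide algebra_simps power2_commute)
  ultimately have "(\<lambda>M. \<Sum>n\<in>{- int (Suc M)..<int (Suc M)}. 1 / (z - of_int n)^2)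
      \<longlonglongrightarrow> Polygamma 1 z + Polygamma 1 (1 - z)"
    by (simp add: tendsto_add)
  then show ?thesis unfolding Polygamma_1_reflection_real[OF z] by (rule LIMSEQ_imp_Suc)
qed

lemma partial_fractions_cot:
  assumes z: "(z::real) \<notin> \<int>"
  shows "(\<lambda>M. \<Sum>n\<in>{- int M..<int M}. 1 / (z - of_int n)) \<longlonglongrightarrow> pi * cot (pi * z)"
proof -
  have z0: "z \<noteq> 0" "1 - z \<noteq> 0" using z by auto
  define D where "D a M = ln (real M) - (\<Sum>n<M. inverse (a + of_nat n))" for a :: real and M
  have "(\<lambda>M. D z (Suc (Suc M))) \<longlonglongrightarrow> Digamma z"
    using LIMSEQ_Suc[OF LIMSEQ_Suc[OF Digamma_LIMSEQ[OF z0(1)]]] by (simp add: D_def)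
  moreover have "(\<lambda>M. D (1 - z) M) \<longlonglongrightarrow> Digamma (1 - z)"
    using Digamma_LIMSEQ[OF z0(2)] by (simp add: D_def)
  moreover have "(\<lambda>M. ln (real (Suc (Suc M))) - ln (real M)) \<longlonglongrightarrow> 0"
    by real_asymp
  ultimately have "(\<lambda>M. (ln (real (Suc (Suc M))) - ln (real M)) - D z (Suc (Suc M)) + D (1 - z) M)
      \<longlonglongrightarrow> 0 - Digamma z + Digamma (1 - z)"
    by (intro tendsto_intros)
  moreover have "(ln (real (Suc (Suc M))) - ln (real M)) - D z (Suc (Suc M)) + D (1 - z) M =
      (\<Sum>n\<in>{- int (Suc M)..<int (Suc M)}. 1 / (z - of_int n))" for M
  proof -
    have "1 / (1 + real m - z) = - (1 / (z - (1 + real m)))" for m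
      by (metis divide_minus_right minus_diff_eq)
    then have "(\<Sum>n\<in>{- int (Suc M)..<int (Suc M)}. 1 / (z - of_int n)) =
        (\<Sum>m<Suc (Suc M). inverse (z + of_nat m)) - (\<Sum>m<M. inverse ((1 - z) + of_nat m))"
      unfolding sum_symmetric_int_split
      by (simp add: inverse_eq_divide algebra_simps) (simp add: sum_negf)
    then show ?thesis by (simp add: D_def)
  qed
  ultimately have "(\<lambda>M. \<Sum>n\<in>{- int (Suc M)..<int (Suc M)}. 1 / (z - of_int n))
      \<longlonglongrightarrow> Digamma (1 - z) - Digamma z"
    by simp
  then show ?thesis unfolding Digamma_reflection_real[OF z] by (rule LIMSEQ_imp_Suc)
qed

section \<open>The Fejer kernel and Vaaler's polynomial\<close>

definition sawtooth :: "real \<Rightarrow> real" where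
  "sawtooth t = t - of_int \<lfloor>t\<rfloor> - 1/2"

definition fejer :: "nat \<Rightarrow> real \<Rightarrow> real" where
  "fejer N t = 1 + 2 * (\<Sum>h=1..N. (1 - real h / real (Suc N)) * cos (2 * pi * real h * t))"

definition vaaler_coeff :: "nat \<Rightarrow> nat \<Rightarrow> real" where
  "vaaler_coeff N h = ((1 - real h / real (Suc N)) * cot (pi * real h / real (Suc N)) + 1 / pi)
     / (2 * real (Suc N))"

text \<open>Vaaler's polynomial damps the Fourier series \<open>-\<Sum>\<^sub>h sin (2\<pi>ht) / (\<pi>h)\<close> of the
  sawtooth.\<close>

definition vaaler :: "nat \<Rightarrow> real \<Rightarrow> real" where
  "vaaler N t = - 2 * (\<Sum>h=1..N. vaaler_coeff N h * sin (2 * pi * real h * t))"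

lemma mult_cos_le_sin: assumes "0 \<le> u" "u \<le> pi" shows "u * cos u \<le> sin u"
proof -
  have "(\<lambda>u. u * cos u - sin u) u \<le> (\<lambda>u. u * cos u - sin u) 0"
  proof (rule DERIV_nonpos_imp_nonincreasing[OF assms(1)])
    fix x assume x: "0 \<le> x" "x \<le> u"
    have "((\<lambda>u. u * cos u - sin u) has_real_derivative (- (x * sin x))) (at x)"
      by (auto intro!: derivative_eq_intros)
    moreover have "0 \<le> x * sin x" using x assms by (intro mult_nonneg_nonneg sin_ge_zero) auto
    ultimately show "\<exists>y. ((\<lambda>u. u * cos u - sin u) has_real_derivative y) (at x) \<and> y \<le> 0" by force
  qed
  then show ?thesis by simp
qed

lemma mult_cot_le_1: assumes "0 < u" "u < pi" shows "u * cot u \<le> 1"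
  using mult_cos_le_sin[of u] sin_gt_zero[of u] assms by (simp add: cot_def field_simps)

lemma
  assumes h: "1 \<le> h" "h \<le> N"
  shows vaaler_coeff_nonneg: "0 \<le> vaaler_coeff N h"
    and vaaler_coeff_le: "vaaler_coeff N h \<le> 1 / (2 * pi * real h)"
proof -
  define L where "L = real (Suc N)"
  define t where "t = real h / L"
  define X where "X = pi * t * cot (pi * t)"
  have L0: "L > 0" and hp: "real h > 0" using h unfolding L_def by auto
  have t0: "0 < t" "t < 1" using h unfolding t_def L_def by (auto simp: field_simps)
  have "X \<le> 1" unfolding X_def using t0 by (intro mult_cot_le_1) auto
  then have hi: "(1 - t) * X + t \<le> 1" using t0 by (smt (verit) mult_left_le)
  text \<open>The lower bound applies \<open>mult_cot_le_1\<close> at the reflected point \<open>\<pi> - \<pi>t\<close>.\<close>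
  have "cot (pi * t) = - cot (pi - pi * t)" unfolding cot_def by (simp add: sin_diff cos_diff)
  then have Xv: "(1 - t) * X = - t * ((pi - pi * t) * cot (pi - pi * t))"
    unfolding X_def by (simp add: algebra_simps)
  have "(pi - pi * t) * cot (pi - pi * t) \<le> 1" using t0 by (intro mult_cot_le_1) auto
  then have lo: "0 \<le> (1 - t) * X + t" unfolding Xv using t0 by (simp add: mult_le_cancel_left1)
  have eq: "vaaler_coeff N h = ((1 - t) * X + t) / (2 * pi * real h)"
    unfolding vaaler_coeff_def X_def t_def L_def[symmetric] using L0 hp by (simp add: field_simps)
  show "0 \<le> vaaler_coeff N h" unfolding eq using lo hp by simp
  show "vaaler_coeff N h \<le> 1 / (2 * pi * real h)"
      unfolding eq using hi hp by (simp add: divide_right_mono)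
qed

lemma sin_mult_dirichlet_kernel:
  "sin a * (1 + 2 * (\<Sum>h=1..m. cos (2 * real h * a))) = sin ((2 * real m + 1) * a)"
proof (induction m)
  case 0 then show ?case by simp
next
  case (Suc m)
  have "sin a * (1 + 2 * (\<Sum>h=1..Suc m. cos (2 * real h * a))) =
        sin a * (1 + 2 * (\<Sum>h=1..m. cos (2 * real h * a))) + 2 * sin a * cos (2 * real (Suc m) * a)"
    by (simp add: algebra_simps)
  also have "2 * sin a * cos (2 * real (Suc m) * a)
      = sin (2 * real (Suc m) * a + a) - sin (2 * real (Suc m) * a - a)"
    by (simp add: sin_add sin_diff)
  also have "2 * real (Suc m) * a - a = (2 * real m + 1) * a" by (simp add: algebra_simps)
  also have "2 * real (Suc m) * a + a = (2 * real (Suc m) + 1) * a" by (simp add: algebra_simps)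
  finally show ?case using Suc by simp
qed

lemma sin_squared_diff: "(sin (A::real))^2 - (sin B)^2 = sin (A + B) * sin (A - B)"
proof -
  have "sin (A + B) * sin (A - B) = (sin A * cos B)^2 - (cos A * sin B)^2"
    unfolding sin_add sin_diff by algebra
  also have "\<dots> = (sin A)^2 * (1 - (sin B)^2) - (1 - (sin A)^2) * (sin B)^2"
    by (simp add: power_mult_distrib cos_squared_eq)
  finally show ?thesis by (simp add: algebra_simps)
qed

lemma sin_squared_mult_fejer_sum:
  "(sin a)^2 * (real (Suc n) + 2 * (\<Sum>h=1..n. (real (Suc n) - real h) * cos (2 * real h * a)))
     = (sin (real (Suc n) * a))^2"
proof (induction n)
  case 0 then show ?case by simp
next
  case (Suc n)
  have "(\<Sum>h=1..Suc n. (real (Suc (Suc n)) - real h) * cos (2 * real h * a)) =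
     (\<Sum>h=1..n. (real (Suc n) - real h) * cos (2 * real h * a))
         + (\<Sum>h=1..Suc n. cos (2 * real h * a))"
    by (simp add: sum.distrib[symmetric] algebra_simps)
  then have "(sin a)^2 * (real (Suc (Suc n))
      + 2 * (\<Sum>h=1..Suc n. (real (Suc (Suc n)) - real h) * cos (2 * real h * a)))
     = (sin a)^2 * (real (Suc n) + 2 * (\<Sum>h=1..n. (real (Suc n) - real h) * cos (2 * real h * a)))
       + sin a * (sin a * (1 + 2 * (\<Sum>h=1..Suc n. cos (2 * real h * a))))"
    by (simp add: algebra_simps power2_eq_square)
  also have "\<dots> = (sin (real (Suc n) * a))^2 + sin a * sin ((2 * real (Suc n) + 1) * a)"
    using Suc sin_mult_dirichlet_kernel[of a "Suc n"] by simp
  also have "\<dots> = (sin (real (Suc (Suc n)) * a))^2"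
    using sin_squared_diff[of "real (Suc (Suc n)) * a" "real (Suc n) * a"]
    by (simp add: algebra_simps)
  finally show ?case .
qed

lemma fejer_closed_form:
  "(sin (pi * t))^2 * fejer N t = (sin (pi * real (Suc N) * t))^2 / real (Suc N)"
proof -
  define L where "L = real (Suc N)"
  have L0: "L > 0" unfolding L_def by simp
  have "(L + 2 * (\<Sum>h=1..N. (L - real h) * cos (2 * real h * (pi * t)))) / L
      = 1 + 2 * (\<Sum>h=1..N. (L - real h) * cos (2 * real h * (pi * t)) / L)"
    using L0 by (simp add: add_divide_distrib sum_divide_distrib[symmetric])
  also have "\<dots> = fejer N t"
    unfolding fejer_def L_def[symmetric] using L0 by (simp add: field_simps mult_ac)
  finally have "(sin (pi * t))^2 * fejer N t
      = (sin (pi * t))^2 * ((L + 2 * (\<Sum>h=1..N. (L - real h) * cos (2 * real h * (pi * t)))) / L)"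
    by simp
  also have "\<dots> = (sin (L * (pi * t)))^2 / L"
      unfolding L_def by (simp only: times_divide_eq_right sin_squared_mult_fejer_sum)
  finally show ?thesis unfolding L_def by (simp add: algebra_simps)
qed

lemma sin_mult_sum_sin_double:
  "sin a * (\<Sum>h=1..n. sin (2 * real h * a)) = sin (real n * a) * sin (real (Suc n) * a)"
proof (induction n)
  case 0 then show ?case by simp
next
  case (Suc n)
  define b where "b = real (Suc n) * a"
  have "sin a * (\<Sum>h=1..Suc n. sin (2 * real h * a))
      = sin (real n * a) * sin b + sin a * sin (2 * b)"
    using Suc by (simp add: algebra_simps b_def)
  also have "real n * a = b - a" by (simp add: b_def algebra_simps)
  also have "sin (b - a) * sin b + sin a * sin (2 * b) = sin b * sin (b + a)"
    unfolding sin_double sin_add sin_diff by (simp add: algebra_simps)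
  also have "b + a = real (Suc (Suc n)) * a" by (simp add: b_def algebra_simps)
  finally show ?case by (simp add: b_def)
qed

lemma geometric_sum_mult: "((w::complex) - 1) * (\<Sum>k<n. w^k) = w^n - 1"
  by (induction n) (auto simp: algebra_simps)

lemma weighted_geometric_sum_mult:
  "((w::complex) - 1) * (\<Sum>k<n. of_nat k * w^k) = of_nat n * w^n - w * (\<Sum>k<n. w^k)"
  by (induction n) (auto simp: algebra_simps)

lemma sum_sawtooth_times_root_of_unity:
  fixes w :: complex
  assumes wL: "w ^ Suc N = 1" and w1: "w \<noteq> 1"
  shows "(\<Sum>k=1..N. of_real (real k / real (Suc N) - 1/2) * w^k) = 1 / (w - 1) + 1/2"
proof -
  define L where "L = real (Suc N)"
  have L0: "L > 0" unfolding L_def by simp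
  have g0: "(\<Sum>k<Suc N. w^k) = 0" using geometric_sum_mult[of w "Suc N"] wL w1 by simp
  have "(w - 1) * (\<Sum>k<Suc N. of_nat k * w^k) = of_real L"
    using weighted_geometric_sum_mult[of w "Suc N"] unfolding wL g0 L_def by simp
  then have ks: "(\<Sum>k<Suc N. of_nat k * w^k) = of_real L / (w - 1)"
    using w1 by (simp add: field_simps)
  have "of_real (real k / L - 1/2) * w^k = of_nat k * w^k / of_real L - (1/2) * w^k" for k
    using L0 by (simp add: field_simps)
  then have "(\<Sum>k<Suc N. of_real (real k / L - 1/2) * w^k) =
      (\<Sum>k<Suc N. of_nat k * w^k) / of_real L - (1/2) * (\<Sum>k<Suc N. w^k)"
    by (simp only: sum_subtractf sum_divide_distrib[symmetric] sum_distrib_left[symmetric])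
  also have "\<dots> = 1 / (w - 1)" unfolding ks g0 using L0 w1 by (simp add: field_simps)
  finally have "(\<Sum>k<Suc N. of_real (real k / L - 1/2) * w^k) = 1 / (w - 1)" .
  moreover have "{..<Suc N} = insert 0 {1..N}" by auto
  ultimately show ?thesis unfolding L_def by (simp add: algebra_simps)
qed

lemma
  assumes "0 < \<theta>" "\<theta> < 2 * pi"
  shows Re_inverse_cis_minus_1: "Re (1 / (cis \<theta> - 1)) = - 1/2"
    and Im_inverse_cis_minus_1: "Im (1 / (cis \<theta> - 1)) = - (1/2) * cot (\<theta> / 2)"
proof -
  have s: "sin (\<theta>/2) > 0" using assms by (intro sin_gt_zero) auto
  have d: "(cos \<theta> - 1)^2 + (sin \<theta>)^2 = 4 * (sin (\<theta>/2))^2"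
    using cos_double_sin[of "\<theta>/2"] by (simp add: power2_eq_square algebra_simps sin_squared_eq)
  have "Re (1 / (cis \<theta> - 1)) = (cos \<theta> - 1) / ((cos \<theta> - 1)^2 + (sin \<theta>)^2)"
    by (simp add: Re_divide)
  also have "\<dots> = - 1/2" unfolding d using s cos_double_sin[of "\<theta>/2"] by (simp add: field_simps)
  finally show "Re (1 / (cis \<theta> - 1)) = - 1/2" .
  have "Im (1 / (cis \<theta> - 1)) = - sin \<theta> / ((cos \<theta> - 1)^2 + (sin \<theta>)^2)"
    by (simp add: Im_divide)
  also have "\<dots> = - (1/2) * cot (\<theta> / 2)"
    unfolding d using s sin_double[of "\<theta>/2"] by (simp add: cot_def field_simps power2_eq_square)
  finally show "Im (1 / (cis \<theta> - 1)) = - (1/2) * cot (\<theta> / 2)" .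
qed

lemma
  assumes h: "1 \<le> h" "h \<le> N"
  shows sum_sawtooth_times_cos:
      "(\<Sum>k=1..N. (real k / real (Suc N) - 1/2) * cos (real k * (2 * pi * real h / real (Suc N))))
          = 0"
    and sum_sawtooth_times_sin:
      "(\<Sum>k=1..N. (real k / real (Suc N) - 1/2) * sin (real k * (2 * pi * real h / real (Suc N))))
         = - (1/2) * cot (pi * real h / real (Suc N))"
proof -
  define \<theta> where "\<theta> = 2 * pi * real h / real (Suc N)"
  have "real h / real (Suc N) < 1" using h by (simp add: field_simps)
  then have "2 * pi * (real h / real (Suc N)) < 2 * pi * 1" by (intro mult_strict_left_mono) auto
  then have \<theta>: "0 < \<theta>" "\<theta> < 2 * pi" using h unfolding \<theta>_def by auto
  have wk: "cis \<theta> ^ k = cis (real k * \<theta>)" for k by (rule Complex.DeMoivre)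
  have "real (Suc N) * \<theta> = 2 * pi * real h" unfolding \<theta>_def by simp
  then have "cis \<theta> ^ Suc N = 1" unfolding wk by simp
  moreover have "cis \<theta> \<noteq> 1" using Re_inverse_cis_minus_1[OF \<theta>] by auto
  ultimately have S: "(\<Sum>k=1..N. of_real (real k / real (Suc N) - 1/2) * cis \<theta> ^ k)
      = 1 / (cis \<theta> - 1) + 1/2"
    by (rule sum_sawtooth_times_root_of_unity)
  have "(\<Sum>k=1..N. (real k / real (Suc N) - 1/2) * cos (real k * \<theta>))
      = Re (\<Sum>k=1..N. of_real (real k / real (Suc N) - 1/2) * cis \<theta> ^ k)"
    unfolding wk by simp
  then show "(\<Sum>k=1..N. (real k / real (Suc N)
      - 1/2) * cos (real k * (2 * pi * real h / real (Suc N)))) = 0"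
    unfolding S \<theta>_def[symmetric] using Re_inverse_cis_minus_1[OF \<theta>] by simp
  have "(\<Sum>k=1..N. (real k / real (Suc N) - 1/2) * sin (real k * \<theta>))
      = Im (\<Sum>k=1..N. of_real (real k / real (Suc N) - 1/2) * cis \<theta> ^ k)"
    unfolding wk by simp
  moreover have "\<theta> / 2 = pi * real h / real (Suc N)" unfolding \<theta>_def by (simp add: field_simps)
  ultimately show "(\<Sum>k=1..N. (real k / real (Suc N)
      - 1/2) * sin (real k * (2 * pi * real h / real (Suc N))))
      = - (1/2) * cot (pi * real h / real (Suc N))"
    unfolding S \<theta>_def[symmetric] using Im_inverse_cis_minus_1[OF \<theta>] by simp
qed

lemma sum_sawtooth_nodes: "(\<Sum>k=1..N. (real k / real (Suc N) - 1/2)) = 0"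
proof -
  have "(\<Sum>k=1..N. real k) = real N * (real N + 1) / 2"
    by (induction N) (simp_all add: field_simps)
  then have "(\<Sum>k=1..N. real k / real (Suc N)) = real N / 2"
    by (simp add: sum_divide_distrib[symmetric] field_simps)
  then show ?thesis by (simp add: sum_subtractf)
qed

lemma sum_sawtooth_times_cos_shift:
  assumes h: "1 \<le> h" "h \<le> N"
  defines "L \<equiv> real (Suc N)"
  shows "(\<Sum>k=1..N. (real k / L - 1/2) * cos (2 * pi * real h * (x - real k / L)))
    = - (1/2) * cot (pi * real h / L) * sin (2 * pi * real h * x)"
proof -
  define v where "v k = real k / L - 1/2" for k :: nat
  have arg: "2 * pi * real h * (x - real k / L)
      = 2 * pi * real h * x - real k * (2 * pi * real h / L)" for k
    by (simp add: algebra_simps)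
  have "(\<Sum>k=1..N. v k * cos (2 * pi * real h * (x - real k / L))) =
        cos (2 * pi * real h * x) * (\<Sum>k=1..N. v k * cos (real k * (2 * pi * real h / L)))
      + sin (2 * pi * real h * x) * (\<Sum>k=1..N. v k * sin (real k * (2 * pi * real h / L)))"
    unfolding arg cos_diff by (simp add: sum_distrib_left sum.distrib algebra_simps)
  then show ?thesis
    using sum_sawtooth_times_cos[OF h] sum_sawtooth_times_sin[OF h] unfolding v_def L_def by simp
qed

text \<open>The identity behind Vaaler's bound: up to a Dirichlet-type sum, Vaaler's polynomial is a
  sawtooth-weighted average of Fejer kernels shifted by the nodes \<open>k / (N + 1)\<close>.\<close>

lemma vaaler_eq_fejer_shifts:
  fixes N :: nat
  defines "L \<equiv> real (Suc N)"
  shows "vaaler N x = (1 / L) * (\<Sum>k=1..N. (real k / L - 1/2) * fejer N (x - real k / L))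
            - (1 / (pi * L)) * (\<Sum>h=1..N. sin (2 * pi * real h * x))"
proof -
  have L0: "L > 0" unfolding L_def by simp
  define v where "v k = real k / L - 1/2" for k :: nat
  define wt where "wt h = 1 - real h / L" for h :: nat
  have "(\<Sum>k=1..N. v k * fejer N (x - real k / L)) =
        (\<Sum>k=1..N. v k) + 2 * (\<Sum>k=1..N. \<Sum>h=1..N. wt h * (v k * cos (2 * pi * real h * (x
            - real k / L))))"
    unfolding fejer_def L_def[symmetric] wt_def
    by (simp add: algebra_simps sum.distrib sum_distrib_left)
  also have "(\<Sum>k=1..N. v k) = 0" unfolding v_def L_def using sum_sawtooth_nodes[of N] by simp
  also have "(\<Sum>k=1..N. \<Sum>h=1..N. wt h * (v k * cos (2 * pi * real h * (x - real k / L))))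
      = (\<Sum>h=1..N. wt h * (\<Sum>k=1..N. v k * cos (2 * pi * real h * (x - real k / L))))"
    by (subst sum.swap) (simp add: sum_distrib_left)
  also have "\<dots> = (\<Sum>h=1..N. wt h * (- (1/2) * cot (pi * real h / L) * sin (2 * pi * real h * x)))"
    using sum_sawtooth_times_cos_shift[of _ N x, folded L_def]
        unfolding v_def by (intro sum.cong refl) auto
  finally have A: "(\<Sum>k=1..N. v k * fejer N (x - real k / L)) =
      - (\<Sum>h=1..N. wt h * cot (pi * real h / L) * sin (2 * pi * real h * x))"
    by (simp add: sum_negf[symmetric] algebra_simps sum_distrib_left)
  have "vaaler N x
      = (\<Sum>h=1..N. -2 * (((wt h * cot (pi * real h / L)
          + 1/pi) / (2 * L)) * sin (2 * pi * real h * x)))"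
    unfolding vaaler_def vaaler_coeff_def wt_def L_def by (simp add: sum_distrib_left)
  also have "\<dots> = (\<Sum>h=1..N. (1/L) * (-(wt h * cot (pi * real h / L) * sin (2 * pi * real h * x)))
      - (1 / (pi * L)) * sin (2 * pi * real h * x))"
    using L0 by (intro sum.cong refl) (simp add: field_simps)
  also have "\<dots> = (1 / L) * (- (\<Sum>h=1..N. wt h * cot (pi * real h / L) * sin (2 * pi * real h * x)))
           - (1 / (pi * L)) * (\<Sum>h=1..N. sin (2 * pi * real h * x))"
    by (simp only: sum_subtractf sum_distrib_left[symmetric] sum_negf)
  finally show ?thesis unfolding A[symmetric] v_def .
qed

lemma not_Ints_shift:
  assumes "real (Suc N) * x \<notin> \<int>"
  shows "x - real k / real (Suc N) \<notin> \<int>"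
proof
  assume "x - real k / real (Suc N) \<in> \<int>"
  then obtain j where "x - real k / real (Suc N) = of_int j" by (auto elim: Ints_cases)
  then have "real (Suc N) * x = of_int (int k + j * int (Suc N))" by (simp add: field_simps)
  then show False using assms by (metis Ints_of_int)
qed

lemma sin_squared_minus_multiple_pi: "(sin (a - real k * pi))^2 = (sin a)^2"
  by (simp add: sin_diff power_mult_distrib power2_eq_square power_mult_distrib[symmetric])

lemma vaaler_closed_form:
  assumes nz: "real (Suc N) * x \<notin> \<int>"
  defines "L \<equiv> real (Suc N)"
  shows "vaaler N x = (sin (pi * L * x))^2 / L^2 *
                 (\<Sum>k=1..N. (real k / L - 1/2) / (sin (pi * (x - real k / L)))^2)
                - sin (pi * real N * x) * sin (pi * L * x) / (pi * L * sin (pi * x))"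
proof -
  have L0: "L > 0" unfolding L_def by simp
  have sx: "sin (pi * x) \<noteq> 0" using sin_pi_times_nonzero not_Ints_shift[OF nz, of 0] by simp
  have fk: "fejer N (x - real k / L)
      = (sin (pi * L * x))^2 / (L * (sin (pi * (x - real k / L)))^2)" for k
  proof -
    have s: "sin (pi * (x - real k / L)) \<noteq> 0"
      using sin_pi_times_nonzero[OF not_Ints_shift[OF nz, of k]] unfolding L_def .
    have "(sin (pi * (x - real k / L)))^2 * fejer N (x - real k / L)
        = (sin (pi * L * (x - real k / L)))^2 / L"
      using fejer_closed_form[of "x - real k / L" N] unfolding L_def by simp
    also have "pi * L * (x - real k / L)
        = pi * L * x - real k * pi" using L0 by (simp add: field_simps)
    also have "(sin (pi * L * x - real k * pi))^2 = (sin (pi * L * x))^2"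
      by (rule sin_squared_minus_multiple_pi)
    finally show ?thesis using s L0 by (simp add: field_simps)
  qed
  have "sin (pi * x) * (\<Sum>h=1..N. sin (2 * real h * (pi * x)))
      = sin (real N * (pi * x)) * sin (L * (pi * x))"
    unfolding L_def by (rule sin_mult_sum_sin_double)
  then have ss: "(\<Sum>h=1..N. sin (2 * pi * real h * x))
      = sin (pi * real N * x) * sin (pi * L * x) / sin (pi * x)"
    using sx by (simp add: field_simps mult_ac)
  show ?thesis
    unfolding vaaler_eq_fejer_shifts L_def[symmetric] fk ss using L0
    by (simp add: sum_distrib_left power2_eq_square field_simps)
qed

section \<open>Vaaler's inequality\<close>

lemma sum_lessThan_int_shift:
  "(\<Sum>k<S. g (c + int k)) = (\<Sum>j\<in>{c..<c + int S}. (g j :: 'a::comm_monoid_add))"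
proof (induction S)
  case 0 then show ?case by simp
next
  case (Suc S)
  have e: "{c..<c + int (Suc S)} = insert (c + int S) {c..<c + int S}" by auto
  show ?case unfolding e using Suc by (simp add: add.commute)
qed

lemma sum_int_blocks:
  "(\<Sum>n\<in>{a..<a + int m}. \<Sum>k<S. g (n * int S + int k))
      = (\<Sum>j\<in>{a * int S..<(a + int m) * int S}. (g j :: 'a::comm_monoid_add))"
proof (induction m)
  case 0 then show ?case by simp
next
  case (Suc m)
  have e: "{a..<a + int (Suc m)} = insert (a + int m) {a..<a + int m}" by auto
  have le1: "a * int S \<le> (a + int m) * int S"
  proof -
    have "0 \<le> int m * int S" by simp
    then show ?thesis by (simp add: algebra_simps)
  qed
  have e2: "{a * int S..<(a + int (Suc m)) * int S}
      = {a * int S..<(a + int m) * int S} \<union> {(a + int m) * int S..<(a + int m) * int S + int S}"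
    using ivl_disj_un_two(3)[OF le1, of "(a + int m) * int S + int S"] by (simp add: algebra_simps)
  have "(\<Sum>j\<in>{a * int S..<(a + int (Suc m)) * int S}. g j) =
        (\<Sum>j\<in>{a * int S..<(a + int m) * int S}. g j) + (\<Sum>j\<in>{(a + int m) * int S..<(a
            + int m) * int S + int S}. g j)"
    unfolding e2 by (rule sum.union_disjoint) auto
  then show ?case unfolding e using Suc sum_lessThan_int_shift[of g "(a + int m) * int S" S]
    by (simp add: add.commute)
qed

lemma sum_symmetric_int_blocks:
  "(\<Sum>n\<in>{- int M..<int M}. \<Sum>k<S. g (n * int S + int k))
      = (\<Sum>j\<in>{- int (M * S)..<int (M * S)}. (g j :: 'a::comm_monoid_add))"
  using sum_int_blocks[where a="- int M" and m="2 * M" and S=S and g=g] by (simp add: algebra_simps)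

lemma LIMSEQ_mult_Suc:
  assumes "(\<lambda>M. X M) \<longlonglongrightarrow> (l::real)"
  shows "(\<lambda>M. X (M * Suc N)) \<longlonglongrightarrow> l"
proof -
  have "strict_mono (\<lambda>M::nat. M * Suc N)" by (intro strict_monoI mult_less_mono1) auto
  from LIMSEQ_subseq_LIMSEQ[OF assms this] show ?thesis by (simp add: o_def)
qed

lemma inverse_square_bounds_neg:
  fixes d :: real assumes "d < 0"
  shows "1/(d-1) - 1/d \<le> 1/d^2" "1/d^2 \<le> 1/(d-1) - 1/d + 1/d^2 - 1/(d-1)^2"
proof -
  define e where "e = - d"
  have e: "e > 0" using assms unfolding e_def by simp
  have d: "d = - e" unfolding e_def by simp
  have a: "1/(d-1) - 1/d = 1/(e*(e+1))"
  proof -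
    have "d \<noteq> 0" "d - 1 \<noteq> 0" using assms by auto
    then have "1/(d-1) - 1/d = 1/((d-1)*d)" by (simp add: field_simps)
    also have "(d-1)*d = e*(e+1)" unfolding d by (simp add: algebra_simps)
    finally show ?thesis .
  qed
  have b: "1/d^2 = 1/(e*e)" unfolding d by (simp add: power2_eq_square)
  have c: "1/(d-1)^2 = 1/((e+1)*(e+1))" unfolding d by (simp add: power2_eq_square algebra_simps)
  have "e * e \<le> e * (e + 1)" using e by simp
  then have "1/(e*(e+1)) \<le> 1/(e*e)" using e by (intro divide_left_mono) auto
  then show "1/(d-1) - 1/d \<le> 1/d^2" unfolding a b .
  have "e * (e + 1) \<le> (e+1)*(e+1)" using e by simp
  then have "1/((e+1)*(e+1)) \<le> 1/(e*(e+1))" using e by (intro divide_left_mono) auto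
  then show "1/d^2 \<le> 1/(d-1) - 1/d + 1/d^2 - 1/(d-1)^2" unfolding a b c by simp
qed

lemma inverse_square_bounds_gt_1:
  fixes d :: real assumes "d > 1"
  shows "1/(d-1) - 1/d + (1/d^2 - 1/(d-1)^2) \<le> 1/d^2" "1/d^2 \<le> 1/(d-1) - 1/d"
proof -
  have a: "1/(d-1) - 1/d = 1/(d*(d-1))" using assms by (simp add: field_simps)
  have b: "1/d^2 = 1/(d*d)" by (simp add: power2_eq_square)
  have c: "1/(d-1)^2 = 1/((d-1)*(d-1))" by (simp add: power2_eq_square)
  have "d * (d - 1) \<le> d * d" using assms by simp
  then have "1/(d*d) \<le> 1/(d*(d-1))" using assms by (intro divide_left_mono) auto
  then show "1/d^2 \<le> 1/(d-1) - 1/d" unfolding a b .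
  have "(d - 1) * (d - 1) \<le> d * (d - 1)" using assms by simp
  then have "1/(d*(d-1)) \<le> 1/((d-1)*(d-1))" using assms by (intro divide_left_mono) auto
  then show "1/(d-1) - 1/d + (1/d^2 - 1/(d-1)^2) \<le> 1/d^2" unfolding a b c by simp
qed

lemma abel_bounds_step_pos:
  fixes mr R0 R1 P Q Q0 Q1 B :: real
  assumes "mr*R0 \<le> P" "P \<le> mr*R0 + Q - mr*Q0" "R1 - R0 \<le> B" "B \<le> R1 - R0 + Q0 - Q1" "mr \<ge> 0"
  shows "(mr+1)*R1 \<le> P + (mr+1)*B + R0 \<and> P + (mr+1)*B + R0 \<le> (mr+1)*R1 + (Q + Q0) - (mr+1)*Q1"
proof -
  have m: "mr + 1 \<ge> 0" using assms by simp
  have h1: "(mr+1)*(R1 - R0) \<le> (mr+1)*B" using mult_left_mono[OF assms(3) m] .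
  have h2: "(mr+1)*B \<le> (mr+1)*(R1 - R0 + Q0 - Q1)" using mult_left_mono[OF assms(4) m] .
  show ?thesis using h1 h2 assms(1,2) unfolding ring_distribs by linarith
qed

lemma abel_bounds_step_neg:
  fixes mr R0 R1 P Q Q0 Q1 B r0 :: real
  assumes "(mr+1)*R0 - r0 \<le> P" "P \<le> (mr+1)*R0 - r0 + Q - mr*Q0"
    and "R0 - R1 - Q0 + Q1 \<le> B" "B \<le> R0 - R1" "mr \<ge> 0"
  shows "(mr+2)*R1 - r0 \<le> P - (mr+1)*B + R1 \<and> P - (mr+1)*B + R1
      \<le> (mr+2)*R1 - r0 + (Q + Q0) - (mr+1)*Q1"
proof -
  have m: "mr + 1 \<ge> 0" using assms by simp
  have h1: "(mr+1)*(R0 - R1 - Q0 + Q1) \<le> (mr+1)*B" using mult_left_mono[OF assms(3) m] .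
  have h2: "(mr+1)*B \<le> (mr+1)*(R0 - R1)" using mult_left_mono[OF assms(4) m] .
  show ?thesis using h1 h2 assms(1,2) unfolding ring_distribs by linarith
qed

text \<open>With \<open>j = nL + k\<close> (\<open>k < L\<close>) we have \<open>gap n k = y - j\<close>, so \<open>weighted_sum M\<close> below is the
  truncation to \<open>|j| < ML\<close> of \<open>\<Sum>\<^sub>j \<lfloor>j/L\<rfloor> / (y - j)\<^sup>2 + \<Sum>\<^sub>n 1 / (y - nL)\<close>.\<close>

locale vaaler_lattice =
  fixes N :: nat and y :: real
  assumes y0: "0 < y" and yL: "y < real (Suc N)" and yZ: "y \<notin> \<int>"
begin

definition "L = real (Suc N)"

abbreviation "gap n k \<equiv> y - (of_int n * L + real k)"

definition "block_sq n = (\<Sum>k<Suc N. 1 / (gap n k)^2)"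
definition "recip n = 1 / (y - of_int n * L)"
definition "recip_sq n = 1 / (y - of_int n * L)^2"

lemma L0: "L > 0" unfolding L_def by simp

lemma telescope_recip: "(\<Sum>k<Suc N. 1/(gap n k - 1) - 1 / gap n k) = recip (n+1) - recip n"
proof -
  define f where "f k = 1 / gap n k" for k :: nat
  have eq: "1/(gap n k - 1) - 1 / gap n k = f (Suc k) - f k" for k
    unfolding f_def by (simp add: algebra_simps)
  have "(\<Sum>k<Suc N. f (Suc k) - f k) = f (Suc N) - f 0" by (rule sum_lessThan_telescope)
  moreover have "f (Suc N) = recip (n+1)"
      unfolding f_def recip_def L_def by (simp add: algebra_simps)
  moreover have "f 0 = recip n" unfolding f_def recip_def by simp
  ultimately show ?thesis unfolding eq by simp
qed

lemma telescope_recip_sq: "(\<Sum>k<Suc N. 1 / (gap n k)^2 - 1/(gap n k - 1)^2)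
    = recip_sq n - recip_sq (n+1)"
proof -
  define f where "f k = 1 / (gap n k)^2" for k :: nat
  have eq: "1 / (gap n k)^2 - 1/(gap n k - 1)^2 = - (f (Suc k) - f k)" for k
    unfolding f_def by (simp add: algebra_simps)
  have "(\<Sum>k<Suc N. f (Suc k) - f k) = f (Suc N) - f 0" by (rule sum_lessThan_telescope)
  moreover have "f (Suc N) = recip_sq (n+1)"
      unfolding f_def recip_sq_def L_def by (simp add: algebra_simps)
  moreover have "f 0 = recip_sq n" unfolding f_def recip_sq_def by simp
  ultimately show ?thesis unfolding eq sum_negf by simp
qed

lemma block_sq_bounds_pos:
  assumes n: "n \<ge> 1"
  shows "recip (n+1) - recip n \<le> block_sq n"
    and "block_sq n \<le> recip (n+1) - recip n + recip_sq n - recip_sq (n+1)"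
proof -
  have d: "gap n k < 0" for k
  proof -
    have "(of_int n - 1) * L \<ge> 0" using n L0 by (intro mult_nonneg_nonneg) auto
    moreover have "(of_int n - 1) * L = of_int n * L - L" by (simp add: algebra_simps)
    moreover have "real k \<ge> 0" by simp
    ultimately show ?thesis using yL L_def by linarith
  qed
  have "(\<Sum>k<Suc N. 1/(gap n k - 1) - 1 / gap n k) \<le> block_sq n"
    unfolding block_sq_def by (intro sum_mono inverse_square_bounds_neg(1) d)
  then show "recip (n+1) - recip n \<le> block_sq n" unfolding telescope_recip .
  have "block_sq n \<le> (\<Sum>k<Suc N. (1/(gap n k - 1) - 1 / gap n k)
       + (1 / (gap n k)^2 - 1/(gap n k - 1)^2))"
    unfolding block_sq_def by (intro sum_mono) (use inverse_square_bounds_neg(2)[OF d] in simp)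
  also have "\<dots> = recip (n+1) - recip n + (recip_sq n - recip_sq (n+1))"
    unfolding sum.distrib telescope_recip telescope_recip_sq ..
  finally show "block_sq n \<le> recip (n+1) - recip n + recip_sq n - recip_sq (n+1)" by simp
qed

lemma block_sq_bounds_neg:
  assumes n: "n \<le> -1"
  shows "recip (n+1) - recip n - recip_sq (n+1) + recip_sq n \<le> block_sq n"
    and "block_sq n \<le> recip (n+1) - recip n"
proof -
  have d: "gap n k > 1" if k: "k < Suc N" for k
  proof -
    have "of_int n * L \<le> (-1) * L" using n L0 by (intro mult_right_mono) auto
    moreover have "real k + 1 \<le> L" using k unfolding L_def by simp
    ultimately show ?thesis using y0 by simp
  qed
  have "recip (n+1) - recip n + (recip_sq n - recip_sq (n+1))
      = (\<Sum>k<Suc N. (1/(gap n k - 1) - 1 / gap n k) + (1 / (gap n k)^2 - 1/(gap n k - 1)^2))"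
    unfolding sum.distrib telescope_recip telescope_recip_sq ..
  also have "\<dots> \<le> block_sq n"
    unfolding block_sq_def by (intro sum_mono inverse_square_bounds_gt_1(1) d) simp
  finally show "recip (n+1) - recip n - recip_sq (n+1) + recip_sq n \<le> block_sq n" by simp
  have "block_sq n \<le> (\<Sum>k<Suc N. 1/(gap n k - 1) - 1 / gap n k)"
    unfolding block_sq_def by (intro sum_mono inverse_square_bounds_gt_1(2) d) simp
  then show "block_sq n \<le> recip (n+1) - recip n" unfolding telescope_recip .
qed

lemma recip_sq_nonneg: "recip_sq n \<ge> 0" unfolding recip_sq_def by simp

lemma weighted_sum_pos_bounds:
  "real m * recip (int (Suc m)) \<le> (\<Sum>n\<in>{1..<int (Suc m)}. of_int n * block_sq n + recip n) \<and>
   (\<Sum>n\<in>{1..<int (Suc m)}. of_int n * block_sq n + recip n) \<le>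
      real m * recip (int (Suc m))
          + (\<Sum>n\<in>{1..<int (Suc m)}. recip_sq n) - real m * recip_sq (int (Suc m))"
proof (induction m)
  case 0 then show ?case by simp
next
  case (Suc m)
  define a where "a = int (Suc m)"
  have e: "{1..<int (Suc (Suc m))} = insert a {1..<a}" unfolding a_def by auto
  have i1: "int (Suc (Suc m)) = a + 1" unfolding a_def by simp
  define P where "P = (\<Sum>n\<in>{1..<a}. of_int n * block_sq n + recip n)"
  define Q where "Q = (\<Sum>n\<in>{1..<a}. recip_sq n)"
  have b: "recip (a + 1) - recip a \<le> block_sq a"
      "block_sq a \<le> recip (a + 1) - recip a + recip_sq a - recip_sq (a + 1)"
    using block_sq_bounds_pos[of a] unfolding a_def by auto
  have s1: "(\<Sum>n\<in>{1..<int (Suc (Suc m))}. of_int n * block_sq n + recip n)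
      = P + (real m + 1) * block_sq a + recip a"
    unfolding e P_def by (simp add: a_def)
  have s2: "(\<Sum>n\<in>{1..<int (Suc (Suc m))}. recip_sq n) = Q + recip_sq a"
    unfolding e Q_def by (simp add: a_def)
  have ih: "real m * recip a \<le> P" "P \<le> real m * recip a + Q - real m * recip_sq a"
    using Suc.IH unfolding P_def Q_def a_def by auto
  have rs: "real (Suc m) = real m + 1" by simp
  show ?case unfolding s1 s2 unfolding i1 rs using abel_bounds_step_pos[OF ih b] by simp
qed

lemma weighted_sum_neg_bounds:
  "real (Suc m) * recip (- int m) - recip 0 \<le> (\<Sum>n\<in>{- int m..<0}. of_int n * block_sq n + recip n) \<and>
   (\<Sum>n\<in>{- int m..<0}. of_int n * block_sq n + recip n) \<le>
      real (Suc m) * recip (- int m) - recip 0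
          + (\<Sum>n\<in>{- int m<..0}. recip_sq n) - real m * recip_sq (- int m)"
proof (induction m)
  case 0 then show ?case by simp
next
  case (Suc m)
  define a where "a = - int m"
  have e: "{- int (Suc m)..<0} = insert (a - 1) {a..<0}" unfolding a_def by auto
  have e2: "{- int (Suc m)<..0} = insert a {a<..0}" unfolding a_def by auto
  have i1: "- int (Suc m) = a - 1" unfolding a_def by simp
  define P where "P = (\<Sum>n\<in>{a..<0}. of_int n * block_sq n + recip n)"
  define Q where "Q = (\<Sum>n\<in>{a<..0}. recip_sq n)"
  have b: "recip a - recip (a - 1) - recip_sq a + recip_sq (a - 1)
      \<le> block_sq (a - 1)" "block_sq (a - 1) \<le> recip a - recip (a - 1)"
    using block_sq_bounds_neg[of "a - 1"] unfolding a_def by auto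
  have s1: "(\<Sum>n\<in>{- int (Suc m)..<0}. of_int n * block_sq n + recip n)
      = P - (real m + 1) * block_sq (a - 1) + recip (a - 1)"
    unfolding e P_def by (simp add: a_def algebra_simps)
  have s2: "(\<Sum>n\<in>{- int (Suc m)<..0}. recip_sq n) = Q + recip_sq a"
    unfolding e2 Q_def by (simp add: a_def)
  have ih: "(real m + 1) * recip a - recip 0 \<le> P"
      "P \<le> (real m + 1) * recip a - recip 0 + Q - real m * recip_sq a"
    using Suc.IH unfolding P_def Q_def a_def of_nat_Suc by (simp_all add: add.commute)
  have rs: "real (Suc (Suc m)) = real m + 2" "real (Suc m) = real m + 1" by simp_all
  show ?case unfolding s1 s2 unfolding i1 rs using abel_bounds_step_neg[OF ih b] by simp
qed

definition "weighted_sum M = (\<Sum>n\<in>{- int M..<int M}. of_int n * block_sq n + recip n)"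
definition "boundary_term M = real (Suc M) * recip (- int M) + (real M - 1) * recip (int M)"

lemma weighted_sum_bounds:
  assumes M: "M \<ge> 1"
  shows "boundary_term M \<le> weighted_sum M"
    and "weighted_sum M \<le> boundary_term M + (\<Sum>n\<in>{- int M..<int M}. recip_sq n)"
proof -
  obtain m where m: "M = Suc m" using M by (cases M) auto
  have sp: "{- int M..<int M} = {- int M..<0} \<union> ({0} \<union> {1..<int M})" using M by auto
  have split: "weighted_sum M
      = (\<Sum>n\<in>{- int M..<0}. of_int n * block_sq n + recip n) + recip 0
          + (\<Sum>n\<in>{1..<int M}. of_int n * block_sq n + recip n)"
    unfolding weighted_sum_def sp by (subst sum.union_disjoint; auto simp: sum.union_disjoint)
  have sq: "(\<Sum>n\<in>{- int M<..0}. recip_sq n) + (\<Sum>n\<in>{1..<int M}. recip_sq n)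
      \<le> (\<Sum>n\<in>{- int M..<int M}. recip_sq n)"
  proof -
    have "(\<Sum>n\<in>{- int M<..0}. recip_sq n) + (\<Sum>n\<in>{1..<int M}. recip_sq n)
        = (\<Sum>n\<in>{- int M<..0} \<union> {1..<int M}. recip_sq n)"
      by (subst sum.union_disjoint) auto
    also have "\<dots> \<le> (\<Sum>n\<in>{- int M..<int M}. recip_sq n)"
      by (intro sum_mono2) (auto simp: recip_sq_nonneg)
    finally show ?thesis .
  qed
  have qm: "real M * recip_sq (- int M) \<ge> 0" "real m * recip_sq (int M) \<ge> 0"
      using recip_sq_nonneg by auto
  have p: "real m * recip (int M) \<le> (\<Sum>n\<in>{1..<int M}. of_int n * block_sq n + recip n)"
          "(\<Sum>n\<in>{1..<int M}. of_int n * block_sq n + recip n)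
              \<le> real m * recip (int M) + (\<Sum>n\<in>{1..<int M}. recip_sq n) - real m * recip_sq (int M)"
    using weighted_sum_pos_bounds[of m] unfolding m by auto
  have n: "real (Suc M) * recip (- int M) - recip 0
      \<le> (\<Sum>n\<in>{- int M..<0}. of_int n * block_sq n + recip n)"
          "(\<Sum>n\<in>{- int M..<0}. of_int n * block_sq n + recip n)
              \<le> real (Suc M) * recip (- int M) - recip 0
                  + (\<Sum>n\<in>{- int M<..0}. recip_sq n) - real M * recip_sq (- int M)"
    using weighted_sum_neg_bounds[of M] by auto
  have em: "real M - 1 = real m" unfolding m by simp
  show "boundary_term M \<le> weighted_sum M" unfolding split boundary_term_def em using p n by simp
  show "weighted_sum M \<le> boundary_term M + (\<Sum>n\<in>{- int M..<int M}. recip_sq n)"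
      unfolding split boundary_term_def em using p n sq qm by simp
qed

definition "sq_partial_sum M = (\<Sum>n\<in>{- int M..<int M}. \<Sum>k<Suc N. 1 / (gap n k)^2)"
definition "shifted_sq_partial_sum k M = (\<Sum>n\<in>{- int M..<int M}. 1 / (gap n k)^2)"
definition "partial_sum M = (\<Sum>n\<in>{- int M..<int M}. \<Sum>k<Suc N. 1 / gap n k)"
definition "lattice_partial_sum M = (\<Sum>n\<in>{- int M..<int M}. recip n)"
definition "node_weight k = real k / L - 1/2"

lemma lattice_point_nonzero: "gap n k \<noteq> 0"
proof
  assume "gap n k = 0"
  then have "y = of_int (n * int (Suc N) + int k)" unfolding L_def by simp
  then show False using yZ by (metis Ints_of_int)
qed

lemma weighted_sum_eq: "weighted_sum M
    = (y / L - 1/2) * sq_partial_sum M - (\<Sum>k<Suc N. node_weight k * shifted_sq_partial_sum k M)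
        - partial_sum M / L + lattice_partial_sum M"
proof -
  have per: "(y / L - 1/2) * (\<Sum>k<Suc N. 1 / (gap n k)^2)
      - (\<Sum>k<Suc N. node_weight k * (1 / (gap n k)^2))
      - (\<Sum>k<Suc N. 1 / gap n k) / L + recip n = of_int n * block_sq n + recip n" for n
  proof -
    have t: "(y / L - 1/2) * (1 / (gap n k)^2) - node_weight k * (1 / (gap n k)^2)
        - (1 / gap n k) / L = of_int n * (1 / (gap n k)^2)" for k
    proof -
      define d where "d = gap n k"
      have d0: "d \<noteq> 0" unfolding d_def by (rule lattice_point_nonzero)
      have "y / L - 1/2 - node_weight k
          = (d + of_int n * L) / L" unfolding node_weight_def d_def
              using L0 by (simp add: field_simps)
      then have "(y / L - 1/2) * (1 / d^2) - node_weight k * (1 / d^2) - (1 / d) / L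
          = ((d + of_int n * L) / L) / d^2 - (1/d)/L"
        by (simp add: algebra_simps)
      also have "\<dots> = of_int n * (1 / d^2)" using d0 L0 by (simp add: field_simps power2_eq_square)
      finally show ?thesis unfolding d_def .
    qed
    have "(y / L - 1/2) * (\<Sum>k<Suc N. 1 / (gap n k)^2)
      - (\<Sum>k<Suc N. node_weight k * (1 / (gap n k)^2))
      - (\<Sum>k<Suc N. 1 / gap n k) / L
      = (\<Sum>k<Suc N. (y / L - 1/2) * (1 / (gap n k)^2) - node_weight k * (1 / (gap n k)^2)
        - (1 / gap n k) / L)"
      by (simp only: sum_subtractf sum_distrib_left[symmetric] sum_divide_distrib[symmetric])
    also have "\<dots> = of_int n * block_sq n" unfolding t block_sq_def by (simp only: sum_distrib_left)
    finally show ?thesis by simp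
  qed
  have sw: "(\<Sum>k<Suc N. node_weight k * shifted_sq_partial_sum k M)
      = (\<Sum>n\<in>{- int M..<int M}. \<Sum>k<Suc N. node_weight k * (1 / (gap n k)^2))"
    unfolding shifted_sq_partial_sum_def by (subst sum.swap) (simp add: sum_distrib_left)
  have "(y / L - 1/2) * sq_partial_sum M - (\<Sum>k<Suc N. node_weight k * shifted_sq_partial_sum k M)
      - partial_sum M / L + lattice_partial_sum M
      = (\<Sum>n\<in>{- int M..<int M}. (y / L - 1/2) * (\<Sum>k<Suc N. 1 / (gap n k)^2)
      - (\<Sum>k<Suc N. node_weight k * (1 / (gap n k)^2))
      - (\<Sum>k<Suc N. 1 / gap n k) / L + recip n)"
    unfolding sw sq_partial_sum_def partial_sum_def lattice_partial_sum_def
    by (simp only: sum_subtractf sum.distrib sum_distrib_left[symmetric]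
        sum_divide_distrib[symmetric])
  also have "\<dots> = weighted_sum M" unfolding per weighted_sum_def ..
  finally show ?thesis by simp
qed

lemma shifted_point_not_Ints: "(y - real k) / L \<notin> \<int>"
proof
  assume "(y - real k) / L \<in> \<int>"
  then obtain j where "(y - real k) / L = of_int j" by (auto elim: Ints_cases)
  then have "y = of_int (int k + j * int (Suc N))" using L0
      unfolding L_def by (simp add: field_simps)
  then show False using yZ by (metis Ints_of_int)
qed

lemma sq_partial_sum_limit: "sq_partial_sum \<longlonglongrightarrow> (pi / sin (pi * y))^2"
proof -
  have "sq_partial_sum = (\<lambda>M. (\<Sum>j\<in>{- int (M * Suc N)..<int (M * Suc N)}. 1 / (y - of_int j)^2))"
    unfolding sq_partial_sum_def[abs_def] L_def
        using sum_symmetric_int_blocks[where S="Suc N" and g="\<lambda>j. 1 / (y - of_int j)^2"]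
            by (simp add: algebra_simps)
  then show ?thesis using LIMSEQ_mult_Suc[OF partial_fractions_sin_squared[OF yZ], of N] by simp
qed

lemma partial_sum_limit: "partial_sum \<longlonglongrightarrow> pi * cot (pi * y)"
proof -
  have "partial_sum = (\<lambda>M. (\<Sum>j\<in>{- int (M * Suc N)..<int (M * Suc N)}. 1 / (y - of_int j)))"
    unfolding partial_sum_def[abs_def] L_def
        using sum_symmetric_int_blocks[where S="Suc N" and g="\<lambda>j. 1 / (y - of_int j)"]
            by (simp add: algebra_simps)
  then show ?thesis using LIMSEQ_mult_Suc[OF partial_fractions_cot[OF yZ], of N] by simp
qed

lemma shifted_sq_partial_sum_limit: "(\<lambda>M. shifted_sq_partial_sum k M) \<longlonglongrightarrow> (1 / L^2) * (pi / sin (pi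
    * ((y - real k) / L)))^2"
proof -
  have "shifted_sq_partial_sum k M
      = (1 / L^2) * (\<Sum>n\<in>{- int M..<int M}. 1 / ((y - real k) / L - of_int n)^2)" for M
  proof -
    have "1 / (gap n k)^2 = (1 / L^2) * (1 / ((y - real k) / L - of_int n)^2)" for n
    proof -
      have "gap n k = L * ((y - real k) / L - of_int n)" using L0 by (simp add: field_simps)
      then show ?thesis by (simp add: power_mult_distrib)
    qed
    then show ?thesis unfolding shifted_sq_partial_sum_def by (simp add: sum_distrib_left)
  qed
  then have "(\<lambda>M. shifted_sq_partial_sum k M)
      = (\<lambda>M. (1 / L^2) * (\<Sum>n\<in>{- int M..<int M}. 1 / ((y - real k) / L - of_int n)^2))" by (rule ext)
  then show ?thesis using tendsto_mult_left[OF partial_fractions_sin_squared[OF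
      shifted_point_not_Ints[of k]], of "1 / L^2"] by simp
qed

lemma lattice_partial_sum_limit: "lattice_partial_sum \<longlonglongrightarrow> (1 / L) * (pi * cot (pi * (y / L)))"
proof -
  have x0: "y / L \<notin> \<int>" using shifted_point_not_Ints[of 0] by simp
  have "lattice_partial_sum M = (1 / L) * (\<Sum>n\<in>{- int M..<int M}. 1 / (y / L - of_int n))" for M
  proof -
    have "recip n = (1 / L) * (1 / (y / L - of_int n))" for n
      unfolding recip_def using L0 by (simp add: field_simps)
    then show ?thesis unfolding lattice_partial_sum_def by (simp add: sum_distrib_left)
  qed
  then have "lattice_partial_sum
      = (\<lambda>M. (1 / L) * (\<Sum>n\<in>{- int M..<int M}. 1 / (y / L - of_int n)))" by (rule ext)
  then show ?thesis using tendsto_mult_left[OF partial_fractions_cot[OF x0], of "1 / L"] by simp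
qed

lemma boundary_term_limit: "boundary_term \<longlonglongrightarrow> 0"
proof -
  have "boundary_term M = (real M + 1) / (y + real M * L) + (real M - 1) / (y - real M * L)" for M
    unfolding boundary_term_def recip_def by (simp add: algebra_simps)
  then have "boundary_term = (\<lambda>M. (real M + 1) / (y + real M * L)
      + (real M - 1) / (y - real M * L))" by (rule ext)
  moreover have "(\<lambda>M. (real M + 1) / (y + real M * L) + (real M - 1) / (y - real M * L)) \<longlonglongrightarrow> 0"
    using L0 by real_asymp
  ultimately show ?thesis by simp
qed

definition "weighted_sum_limit = (y / L - 1/2) * (pi / sin (pi * y))^2
   - (\<Sum>k<Suc N. node_weight k * ((1 / L^2) * (pi / sin (pi * ((y - real k) / L)))^2))
   - pi * cot (pi * y) / L + (1 / L) * (pi * cot (pi * (y / L)))"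

lemma weighted_sum_tendsto: "weighted_sum \<longlonglongrightarrow> weighted_sum_limit"
proof -
  have "(\<lambda>M. (y / L - 1/2) * sq_partial_sum M
      - (\<Sum>k<Suc N. node_weight k * shifted_sq_partial_sum k M) - partial_sum M / L
          + lattice_partial_sum M) \<longlonglongrightarrow> weighted_sum_limit"
    unfolding weighted_sum_limit_def
    using L0 by (intro tendsto_intros sq_partial_sum_limit partial_sum_limit
        lattice_partial_sum_limit shifted_sq_partial_sum_limit tendsto_sum) auto
  then show ?thesis unfolding weighted_sum_eq[abs_def] .
qed

lemma weighted_sum_limit_bounds:
  "0 \<le> weighted_sum_limit" "weighted_sum_limit \<le> (1 / L^2) * (pi / sin (pi * (y / L)))^2"
proof -
  have ev: "eventually (\<lambda>M. M \<ge> 1) sequentially" by (rule eventually_ge_at_top)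
  have lo: "eventually (\<lambda>M. boundary_term M \<le> weighted_sum M) sequentially"
    using ev by eventually_elim (rule weighted_sum_bounds(1))
  have hi: "eventually (\<lambda>M. weighted_sum M
      \<le> boundary_term M + shifted_sq_partial_sum 0 M) sequentially"
    using ev by eventually_elim (use weighted_sum_bounds(2) in \<open>simp add:
        shifted_sq_partial_sum_def recip_sq_def\<close>)
  show "0 \<le> weighted_sum_limit"
      using tendsto_le[OF _ weighted_sum_tendsto boundary_term_limit lo] by simp
  have "(\<lambda>M. boundary_term M + shifted_sq_partial_sum 0 M) \<longlonglongrightarrow> 0
      + (1 / L^2) * (pi / sin (pi * ((y - real 0) / L)))^2"
    by (intro tendsto_intros boundary_term_limit shifted_sq_partial_sum_limit)
  then show "weighted_sum_limit \<le> (1 / L^2) * (pi / sin (pi * (y / L)))^2"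
    using tendsto_le[OF _ _ weighted_sum_tendsto hi] by simp
qed

end

context vaaler_lattice
begin

lemma sum_node_weight_cosec_squared:
  defines "x \<equiv> y / L"
  shows "(\<Sum>k<Suc N. node_weight k * ((1 / L^2) * (pi / sin (pi * ((y - real k) / L)))^2))
      = - (1/2) * (pi^2 / (L^2 * (sin (pi * x))^2))
        + (pi^2 / L^2) * (\<Sum>k=1..N. (real k / L - 1/2) / (sin (pi * (x - real k / L)))^2)"
proof -
  have "(y - real k) / L = x - real k / L" for k unfolding x_def using L0 by (simp add: field_simps)
  then have "node_weight k * ((1 / L^2) * (pi / sin (pi * ((y - real k) / L)))^2)
      = (pi^2 / L^2) * ((real k / L - 1/2) / (sin (pi * (x - real k / L)))^2)" for k
    unfolding node_weight_def by (simp add: power_divide)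
  moreover have "{..<Suc N} = insert 0 {1..N}" by auto
  ultimately show ?thesis by (simp add: sum_distrib_left node_weight_def power_divide)
qed

lemma pi_squared_times_vaaler_error:
  defines "x \<equiv> y / L"
  shows "pi^2 * (x - 1/2 - vaaler N x)
    = (sin (pi * y))^2 * (weighted_sum_limit - pi^2 / (2 * L^2 * (sin (pi * x))^2))"
proof -
  define h where "h = pi^2 / (L^2 * (sin (pi * x))^2)"
  have y: "y = L * x" unfolding x_def using L0 by simp
  have "L * x \<notin> \<int>" using yZ y by simp
  then have x0: "x \<notin> \<int>" using not_Ints_shift[of N x 0] unfolding L_def by simp
  have sx: "sin (pi * x) \<noteq> 0" using sin_pi_times_nonzero[OF x0] .
  have sy: "sin (pi * y) \<noteq> 0" using sin_pi_times_nonzero[OF yZ] .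
  define S where "S = (\<Sum>k=1..N. (real k / L - 1/2) / (sin (pi * (x - real k / L)))^2)"
  have "pi * real N * x = pi * y - pi * x" unfolding y L_def by (simp add: algebra_simps)
  then have sN: "sin (pi * real N * x) = sin (pi * y) * cos (pi * x) - cos (pi * y) * sin (pi * x)"
    by (simp add: sin_diff)
  have "- pi * cot (pi * y) / L + (1 / L) * (pi * cot (pi * x))
      = pi * sin (pi * real N * x) / (L * sin (pi * x) * sin (pi * y))"
    unfolding sN cot_def using sx sy L0 by (simp add: field_simps)
  then have W: "weighted_sum_limit
      = (x - 1/2) * (pi^2 / (sin (pi * y))^2) + h / 2 - (pi^2 / L^2) * S
      + pi * sin (pi * real N * x) / (L * sin (pi * x) * sin (pi * y))"
    unfolding weighted_sum_limit_def sum_node_weight_cosec_squared S_def h_def x_def[symmetric]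
    by (simp add: power_divide algebra_simps)
  have V: "vaaler N x = (sin (pi * y))^2 / L^2 * S
      - sin (pi * real N * x) * sin (pi * y) / (pi * L * sin (pi * x))"
    using vaaler_closed_form[of N x] \<open>L * x \<notin> \<int>\<close> unfolding S_def y L_def by (simp add: mult_ac)
  show ?thesis unfolding W V h_def using sx sy L0 by (simp add: field_simps power2_eq_square)
qed

lemma vaaler_error_bound:
  "\<bar>y / L - 1/2 - vaaler N (y / L)\<bar> \<le> fejer N (y / L) / (2 * L)"
proof -
  define x where "x = y / L"
  define h where "h = pi^2 / (L^2 * (sin (pi * x))^2)"
  have y: "y = L * x" unfolding x_def using L0 by simp
  have "0 \<le> weighted_sum_limit" "weighted_sum_limit \<le> h"
    using weighted_sum_limit_bounds unfolding h_def x_def by (simp_all add: power_divide)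
  then have "\<bar>weighted_sum_limit - h / 2\<bar> \<le> h / 2" unfolding abs_le_iff by linarith
  then have "pi^2 * \<bar>x - 1/2 - vaaler N x\<bar> \<le> (sin (pi * y))^2 * (h / 2)"
  proof -
    have "pi^2 * (x - 1/2 - vaaler N x) = (sin (pi * y))^2 * (weighted_sum_limit - h / 2)"
      using pi_squared_times_vaaler_error unfolding x_def[symmetric] h_def by simp
    then have "pi^2 * \<bar>x - 1/2 - vaaler N x\<bar> = (sin (pi * y))^2 * \<bar>weighted_sum_limit - h / 2\<bar>"
      by (metis abs_mult abs_of_nonneg zero_le_power2)
    moreover have "(sin (pi * y))^2 * \<bar>weighted_sum_limit - h / 2\<bar> \<le> (sin (pi * y))^2 * (h / 2)"
      using \<open>\<bar>weighted_sum_limit - h / 2\<bar> \<le> h / 2\<close> by (rule mult_left_mono) simp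
    ultimately show ?thesis by simp
  qed
  also have "\<dots> = pi^2 * (fejer N x / (2 * L))"
  proof -
    have "x \<notin> \<int>" using yZ y not_Ints_shift[of N x 0] unfolding L_def by auto
    then have sx: "sin (pi * x) \<noteq> 0" by (rule sin_pi_times_nonzero)
    have "(sin (pi * x))^2 * fejer N x = (sin (pi * y))^2 / L"
      using fejer_closed_form[of x N] unfolding y L_def by (simp add: mult_ac)
    then show ?thesis unfolding h_def using sx L0 by (simp add: field_simps power2_eq_square)
  qed
  finally have "\<bar>x - 1/2 - vaaler N x\<bar> \<le> fejer N x / (2 * L)" by (rule mult_left_le_imp_le) simp
  then show ?thesis unfolding x_def .
qed

end

lemma sawtooth_vaaler_bound_off_nodes:
  assumes "0 < x" "x < 1" and "real (Suc N) * x \<notin> \<int>"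
  shows "\<bar>x - 1/2 - vaaler N x\<bar> \<le> fejer N x / (2 * real (Suc N))"
proof -
  interpret vaaler_lattice N "real (Suc N) * x"
    by unfold_locales (use assms in auto)
  show ?thesis using vaaler_error_bound unfolding L_def by simp
qed

lemma between_consecutive_Ints_not_Ints:
  assumes "of_int k < (t::real)" "t < of_int k + 1" shows "t \<notin> \<int>"
proof
  assume "t \<in> \<int>"
  then obtain j where "t = of_int j" by (auto elim: Ints_cases)
  with assms have "k < j" "j < k + 1" by simp_all
  then show False by simp
qed

text \<open>At the nodes \<open>k / (N + 1)\<close> the bound follows by continuity from the right.\<close>

lemma sawtooth_vaaler_bound_unit_interval:
  assumes x: "0 \<le> x" "x < 1"
  shows "\<bar>x - 1/2 - vaaler N x\<bar> \<le> fejer N x / (2 * real (Suc N))"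
proof -
  define L where "L = real (Suc N)"
  define f where "f t = fejer N t / (2 * L) - \<bar>t - 1/2 - vaaler N t\<bar>" for t
  define k where "k = \<lfloor>L * x\<rfloor>"
  have L0: "L > 0" unfolding L_def by simp
  have "L * x < L * 1" using x L0 by (intro mult_strict_left_mono) auto
  then have "L * x < of_int (int (Suc N))" unfolding L_def by simp
  then have "k < int (Suc N)" unfolding k_def by (simp only: floor_less_iff)
  then have "real_of_int (k + 1) \<le> real_of_int (int (Suc N))" by (simp only: of_int_le_iff)
  then have kL: "of_int k + 1 \<le> L" unfolding L_def by simp
  have "L * x < of_int k + 1" unfolding k_def by linarith
  then have xk: "x < (of_int k + 1) / L" using L0 by (simp add: field_simps)
  have "f t \<ge> 0" if "t \<in> {x<..<(of_int k + 1) / L}" for t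
  proof -
    have "of_int k \<le> L * x" unfolding k_def by simp
    also have "L * x < L * t" using that L0 by simp
    finally have "of_int k < L * t" .
    moreover have Lt: "L * t < of_int k + 1" using that L0 by (simp add: field_simps)
    ultimately have "L * t \<notin> \<int>" by (rule between_consecutive_Ints_not_Ints)
    moreover have "L * t < L * 1" using Lt kL by simp
    then have "t < 1" using L0 by simp
    moreover have "0 < t" using that x by simp
    ultimately show ?thesis
      using sawtooth_vaaler_bound_off_nodes[of t N] unfolding f_def L_def by simp
  qed
  then have "eventually (\<lambda>t. f t \<ge> 0) (at_right x)"
    using eventually_at_right_real[OF xk] by (auto elim: eventually_mono)
  moreover have "(f \<longlongrightarrow> f x) (at_right x)"
    unfolding f_def fejer_def vaaler_def using L0 by (intro tendsto_intros) auto
  ultimately have "f x \<ge> 0" by (intro tendsto_lowerbound) auto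
  then show ?thesis unfolding f_def L_def by simp
qed

lemma sin_2pi_mult_periodic: "sin (2 * pi * real h * (t - of_int m)) = sin (2 * pi * real h * t)"
proof -
  have e: "2 * pi * real h * (t - of_int m) = 2 * pi * real h * t - (2 * pi) * of_int (int h * m)"
    by (simp add: algebra_simps)
  show ?thesis unfolding e sin_diff cos_int_2pin sin_int_2pin by simp
qed

lemma cos_2pi_mult_periodic: "cos (2 * pi * real h * (t - of_int m)) = cos (2 * pi * real h * t)"
proof -
  have e: "2 * pi * real h * (t - of_int m) = 2 * pi * real h * t - (2 * pi) * of_int (int h * m)"
    by (simp add: algebra_simps)
  show ?thesis unfolding e cos_diff cos_int_2pin sin_int_2pin by simp
qed

theorem sawtooth_vaaler_bound: "\<bar>sawtooth t - vaaler N t\<bar> \<le> fejer N t / (2 * real (Suc N))"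
proof -
  define x where "x = t - of_int \<lfloor>t\<rfloor>"
  have "0 \<le> x" "x < 1" unfolding x_def by linarith+
  moreover have "sawtooth t = x - 1/2" unfolding sawtooth_def x_def by simp
  moreover have "vaaler N t = vaaler N x" unfolding vaaler_def x_def sin_2pi_mult_periodic ..
  moreover have "fejer N t = fejer N x" unfolding fejer_def x_def cos_2pi_mult_periodic ..
  ultimately show ?thesis using sawtooth_vaaler_bound_unit_interval[of x N] by simp
qed

section \<open>Exponential sums\<close>

lemma e_eq_cis: "e x = cis (2 * pi * x)"
  unfolding e_def cis_conv_exp by (simp add: mult_ac)

lemma norm_e [simp]: "cmod (e x) = 1"
  unfolding e_eq_cis by simp

lemma e_add: "e (a + b) = e a * e b"
  unfolding e_def by (simp add: algebra_simps exp_add[symmetric])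

lemma e_0 [simp]: "e 0 = 1"
  unfolding e_def by simp

lemma e_plus_e_minus: "e x + e (- x) = 2 * complex_of_real (cos (2 * pi * x))"
  unfolding e_eq_cis by (simp add: complex_eq_iff)

lemma e_minus_e_minus: "e x - e (- x) = 2 * \<i> * complex_of_real (sin (2 * pi * x))"
  unfolding e_eq_cis by (simp add: complex_eq_iff)

lemma norm_cis_minus_1_le: "cmod (cis t - 1) \<le> \<bar>t\<bar>"
proof -
  have "(cmod (cis t - 1))^2 = (cos t - 1)^2 + (sin t)^2" by (simp add: cmod_power2)
  also have "\<dots> = 4 * (sin (t/2))^2"
    using cos_double_sin[of "t/2"] by (simp add: power2_eq_square algebra_simps sin_squared_eq)
  also have "\<dots> \<le> 4 * (t/2)^2"
    using abs_sin_x_le_abs_x[of "t/2"] by (simp only: abs_le_square_iff mult_le_cancel_left) simp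
  also have "\<dots> = \<bar>t\<bar>^2" by (simp add: power2_eq_square)
  finally show ?thesis by (rule power2_le_imp_le) simp
qed

lemma norm_e_minus_1_le: "cmod (e x - 1) \<le> min (2 * pi * \<bar>x\<bar>) 2"
proof -
  have "cmod (e x - 1) \<le> 2 * pi * \<bar>x\<bar>"
    using norm_cis_minus_1_le[of "2 * pi * x"] unfolding e_eq_cis by (simp add: abs_mult)
  moreover have "cmod (e x - 1) \<le> 2"
    using norm_triangle_ineq4[of "e x" 1] by simp
  ultimately show ?thesis by simp
qed

lemma sum_symmetric_atLeastAtMost_int:
  "(\<Sum>h\<in>{- int N..int N}. f h) = f 0 + (\<Sum>h=1..N. f (int h) + f (- int h))"
proof (induction N)
  case 0 then show ?case by simp
next
  case (Suc N)
  have "{- int (Suc N)..int (Suc N)}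
      = insert (int (Suc N)) (insert (- int (Suc N)) {- int N..int N})"
    by auto
  then show ?case using Suc by (simp add: algebra_simps)
qed

definition fejer_weight :: "nat \<Rightarrow> int \<Rightarrow> real" where
  "fejer_weight N h = 1 - of_int \<bar>h\<bar> / real (Suc N)"

definition vaaler_fourier_coeff :: "nat \<Rightarrow> int \<Rightarrow> complex" where
  "vaaler_fourier_coeff N h = \<i> * of_int (sgn h) * of_real (vaaler_coeff N (nat \<bar>h\<bar>))"

lemma fejer_exp_expansion:
  "complex_of_real (fejer N t)
      = (\<Sum>h\<in>{- int N..int N}. of_real (fejer_weight N h) * e (of_int h * t))"
proof -
  have "(\<Sum>h\<in>{- int N..int N}. of_real (fejer_weight N h) * e (of_int h * t))
      = 1 + (\<Sum>h=1..N. of_real (fejer_weight N (int h)) * (e (real h * t) + e (- (real h * t))))"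
    unfolding sum_symmetric_atLeastAtMost_int by (simp add: fejer_weight_def algebra_simps)
  also have "\<dots> = 1 + (\<Sum>h=1..N. of_real (2 * ((1
      - real h / real (Suc N)) * cos (2 * pi * real h * t))))"
    unfolding e_plus_e_minus fejer_weight_def
    by (intro arg_cong2[where f="(+)"] sum.cong refl) (simp add: mult_ac)
  also have "\<dots> = complex_of_real (fejer N t)"
    unfolding fejer_def by (simp add: sum_distrib_left)
  finally show ?thesis ..
qed

lemma vaaler_exp_expansion:
  "complex_of_real (vaaler N t)
      = (\<Sum>h\<in>{- int N..int N}. vaaler_fourier_coeff N h * e (of_int h * t))"
proof -
  have "(\<Sum>h\<in>{- int N..int N}. vaaler_fourier_coeff N h * e (of_int h * t))
      = (\<Sum>h=1..N. vaaler_fourier_coeff N (int h) * e (real h * t)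
          + vaaler_fourier_coeff N (- int h) * e (- (real h * t)))"
    unfolding sum_symmetric_atLeastAtMost_int by (simp add: vaaler_fourier_coeff_def)
  also have "\<dots> = (\<Sum>h=1..N. \<i> * of_real (vaaler_coeff N h) * (e (real h * t) - e (- (real h * t))))"
    by (intro sum.cong refl) (auto simp: vaaler_fourier_coeff_def algebra_simps)
  also have "\<dots> = (\<Sum>h=1..N. of_real (- 2 * (vaaler_coeff N h * sin (2 * pi * real h * t))))"
    unfolding e_minus_e_minus by (intro sum.cong refl) (simp add: mult_ac)
  also have "\<dots> = complex_of_real (vaaler N t)"
    unfolding vaaler_def by (simp add: sum_distrib_left)
  finally show ?thesis ..
qed

lemma norm_vaaler_fourier_coeff_le:
  assumes "h \<noteq> 0" "\<bar>h\<bar> \<le> int N"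
  shows "cmod (vaaler_fourier_coeff N h) \<le> 1 / (2 * pi * of_int \<bar>h\<bar>)"
proof -
  have h1: "1 \<le> nat \<bar>h\<bar>" "nat \<bar>h\<bar> \<le> N" using assms by auto
  have "\<bar>sgn h\<bar> = 1" using assms by (cases "h > 0") auto
  then have "\<bar>real_of_int (sgn h)\<bar> = 1" by (metis of_int_1 of_int_abs)
  then have "cmod (vaaler_fourier_coeff N h) = \<bar>vaaler_coeff N (nat \<bar>h\<bar>)\<bar>"
    unfolding vaaler_fourier_coeff_def norm_mult norm_of_int norm_of_real by simp
  also have "\<dots> \<le> 1 / (2 * pi * real (nat \<bar>h\<bar>))"
    using vaaler_coeff_nonneg[OF h1] vaaler_coeff_le[OF h1] by simp
  finally show ?thesis by simp
qed

lemma norm_vaaler_fourier_coeff_times_e_minus_1_le: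
  assumes h: "h \<noteq> 0" "\<bar>h\<bar> \<le> int N" and a: "\<alpha> \<ge> 1"
  shows "cmod (vaaler_fourier_coeff N h) * cmod (e (- (of_int h / \<alpha>)) - 1)
    \<le> min (1 / \<alpha>) (1 / real_of_int \<bar>h\<bar>)"
proof -
  define c where "c = cmod (vaaler_fourier_coeff N h)"
  define d where "d = cmod (e (- (of_int h / \<alpha>)) - 1)"
  have hp: "real_of_int \<bar>h\<bar> > 0" using h by simp
  have c: "c \<le> 1 / (2 * pi * of_int \<bar>h\<bar>)"
      unfolding c_def by (rule norm_vaaler_fourier_coeff_le[OF h])
  have d: "d \<le> 2 * pi * (of_int \<bar>h\<bar> / \<alpha>)" "d \<le> 2"
    using norm_e_minus_1_le[of "- (of_int h / \<alpha>)"] a unfolding d_def by (simp_all add: abs_div)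
  have "c * d \<le> 1 / \<alpha>"
  proof -
    have "c * d \<le> 1 / (2 * pi * of_int \<bar>h\<bar>) * (2 * pi * (of_int \<bar>h\<bar> / \<alpha>))"
      by (rule mult_mono[OF c d(1)]) (auto simp: d_def)
    also have "\<dots> = 1 / \<alpha>" using hp by (simp add: field_simps)
    finally show ?thesis .
  qed
  moreover have "c * d \<le> 1 / of_int \<bar>h\<bar>"
  proof -
    have "c * d \<le> 1 / (2 * pi * of_int \<bar>h\<bar>) * 2"
      by (rule mult_mono[OF c d(2)]) (auto simp: d_def)
    also have "\<dots> \<le> 1 / of_int \<bar>h\<bar>" using hp pi_gt3 by (simp add: field_simps)
    finally show ?thesis .
  qed
  ultimately show ?thesis unfolding c_def d_def by simp
qed

lemma e_mult_shift_factor: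
  assumes "\<alpha> \<noteq> 0"
  shows "e (of_int h * ((\<beta> - real m) / \<alpha> + s))
    = e (of_int h * (\<beta> / \<alpha> + s)) * e (- real m * (of_int h / \<alpha>))"
proof -
  have eq: "of_int h * ((\<beta> - real m) / \<alpha> + s)
      = of_int h * (\<beta> / \<alpha> + s) + (- real m * (of_int h / \<alpha>))"
    using assms by (simp add: field_simps)
  show ?thesis unfolding eq e_add ..
qed

lemma sum_fejer_shifts_le:
  assumes "\<alpha> \<noteq> 0"
  shows "(\<Sum>m\<in>Ms. fejer N ((\<beta> - real m) / \<alpha> + s))
    \<le> (\<Sum>h\<in>{- int N..int N}. cmod (\<Sum>m\<in>Ms. e (- real m * (of_int h / \<alpha>))))"
proof -
  define S where "S h = (\<Sum>m\<in>Ms. e (- real m * (of_int h / \<alpha>)))" for h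
  define c where "c h = of_real (fejer_weight N h) * e (of_int h * (\<beta> / \<alpha> + s))" for h
  have "complex_of_real (\<Sum>m\<in>Ms. fejer N ((\<beta> - real m) / \<alpha> + s))
      = (\<Sum>m\<in>Ms. \<Sum>h\<in>{- int N..int N}. of_real (fejer_weight N h) * e (of_int h * ((\<beta> - real m) / \<alpha>
          + s)))"
    by (simp add: fejer_exp_expansion)
  also have "\<dots> = (\<Sum>h\<in>{- int N..int N}. c h * S h)"
    unfolding c_def S_def by (subst sum.swap) (simp add: e_mult_shift_factor[OF assms]
        sum_distrib_left mult_ac)
  finally have eq: "complex_of_real (\<Sum>m\<in>Ms. fejer N ((\<beta> - real m) / \<alpha> + s))
      = (\<Sum>h\<in>{- int N..int N}. c h * S h)" .
  have "(\<Sum>m\<in>Ms. fejer N ((\<beta> - real m) / \<alpha> + s))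
      \<le> cmod (complex_of_real (\<Sum>m\<in>Ms. fejer N ((\<beta> - real m) / \<alpha> + s)))"
    by (metis norm_of_real abs_ge_self)
  also have "\<dots> \<le> (\<Sum>h\<in>{- int N..int N}. cmod (c h * S h))"
    unfolding eq by (rule norm_sum)
  also have "\<dots> \<le> (\<Sum>h\<in>{- int N..int N}. cmod (S h))"
  proof (rule sum_mono)
    fix h assume "h \<in> {- int N..int N}"
    then have "\<bar>fejer_weight N h\<bar>
        \<le> 1" unfolding fejer_weight_def by (auto simp: field_simps abs_le_iff)
    then show "cmod (c h * S h) \<le> cmod (S h)"
      unfolding c_def norm_mult by (simp add: mult_left_le_one_le)
  qed
  finally show ?thesis unfolding S_def .
qed

lemma norm_sum_vaaler_differences_le:
  assumes "\<alpha> \<ge> 1"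
  shows "cmod (\<Sum>m\<in>Ms. \<phi> m * complex_of_real
           (vaaler N ((\<beta> - real m) / \<alpha> - 1 / \<alpha>) - vaaler N ((\<beta> - real m) / \<alpha>)))
    \<le> (\<Sum>h\<in>{- int N..int N} - {0}. min (1 / \<alpha>) (1 / real_of_int \<bar>h\<bar>)
         * cmod (\<Sum>m\<in>Ms. \<phi> m * e (- real m * (of_int h / \<alpha>))))"
proof -
  have a: "\<alpha> \<noteq> 0" using assms by simp
  define T where "T h = (\<Sum>m\<in>Ms. \<phi> m * e (- real m * (of_int h / \<alpha>)))" for h
  define c where "c h = vaaler_fourier_coeff N h * (e (- (of_int h / \<alpha>)) - 1)" for h
  have diff: "complex_of_real (vaaler N ((\<beta> - real m) / \<alpha> - 1 / \<alpha>) - vaaler N ((\<beta> - real m) / \<alpha>))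
     = (\<Sum>h\<in>{- int N..int N}. c h * e (of_int h * (\<beta> / \<alpha>)) * e (- real m * (of_int h / \<alpha>)))" for m
  proof -
    have "e (of_int h * ((\<beta> - real m) / \<alpha> - 1 / \<alpha>))
        = e (- (of_int h / \<alpha>)) * e (of_int h * (\<beta> / \<alpha>)) * e (- real m * (of_int h / \<alpha>))" for h
      using e_mult_shift_factor[OF a, of h \<beta> m "- 1 / \<alpha>"]
        e_add[of "- (of_int h / \<alpha>)" "of_int h * (\<beta> / \<alpha>)"]
      by (simp add: algebra_simps)
    moreover have "e (of_int h * ((\<beta> - real m) / \<alpha>))
        = e (of_int h * (\<beta> / \<alpha>)) * e (- real m * (of_int h / \<alpha>))" for h
      using e_mult_shift_factor[OF a, of h \<beta> m 0] by simp
    ultimately show ?thesis unfolding of_real_diff vaaler_exp_expansion c_def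
        sum_subtractf[symmetric]
      by (intro sum.cong refl) (simp add: algebra_simps)
  qed
  have "(\<Sum>m\<in>Ms. \<phi> m * complex_of_real
         (vaaler N ((\<beta> - real m) / \<alpha> - 1 / \<alpha>) - vaaler N ((\<beta> - real m) / \<alpha>)))
      = (\<Sum>h\<in>{- int N..int N}. c h * e (of_int h * (\<beta> / \<alpha>)) * T h)"
    unfolding diff T_def sum_distrib_left by (subst sum.swap) (simp add: mult_ac)
  also have "\<dots> = (\<Sum>h\<in>{- int N..int N} - {0}. c h * e (of_int h * (\<beta> / \<alpha>)) * T h)"
    by (subst sum.remove[of _ 0]) (auto simp: c_def vaaler_fourier_coeff_def)
  finally have "cmod (\<Sum>m\<in>Ms. \<phi> m * complex_of_real
         (vaaler N ((\<beta> - real m) / \<alpha> - 1 / \<alpha>) - vaaler N ((\<beta> - real m) / \<alpha>)))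
      \<le> (\<Sum>h\<in>{- int N..int N} - {0}. cmod (c h * e (of_int h * (\<beta> / \<alpha>)) * T h))"
    by (simp add: norm_sum)
  also have "\<dots> = (\<Sum>h\<in>{- int N..int N} - {0}. cmod (c h) * cmod (T h))"
    by (simp add: norm_mult)
  also have "\<dots> \<le> (\<Sum>h\<in>{- int N..int N} - {0}. min (1 / \<alpha>) (1 / real_of_int \<bar>h\<bar>) * cmod (T h))"
    unfolding c_def norm_mult
    by (intro sum_mono mult_right_mono norm_vaaler_fourier_coeff_times_e_minus_1_le assms) auto
  finally show ?thesis unfolding T_def .
qed

lemma sawtooth_diff_eq: "sawtooth (x - 1/\<alpha>) - sawtooth x = real_of_int (\<lfloor>x\<rfloor> - \<lfloor>x - 1/\<alpha>\<rfloor>) - 1/\<alpha>"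
  unfolding sawtooth_def by simp

lemma norm_sum_vaaler_error_differences_le:
  fixes N :: nat
  assumes \<phi>: "\<forall>m. cmod (\<phi> m) \<le> 1" and a: "\<alpha> \<noteq> 0"
  defines "R \<equiv> \<lambda>t. sawtooth t - vaaler N t"
  shows "cmod (\<Sum>m\<in>Ms. \<phi> m * complex_of_real (R ((\<beta> - real m) / \<alpha> - 1/\<alpha>) - R ((\<beta> - real m) / \<alpha>)))
    \<le> (1 / real (Suc N)) * (\<Sum>h\<in>{- int N..int N}. cmod (\<Sum>m\<in>Ms. e (- real m * (of_int h / \<alpha>))))"
proof -
  define L where "L = real (Suc N)"
  define F where "F s = (\<Sum>m\<in>Ms. fejer N ((\<beta> - real m) / \<alpha> + s))" for s
  define S where "S = (\<Sum>h\<in>{- int N..int N}. cmod (\<Sum>m\<in>Ms. e (- real m * (of_int h / \<alpha>))))"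
  have R: "\<bar>R t\<bar> \<le> fejer N t / (2 * L)" for t unfolding R_def L_def by (rule sawtooth_vaaler_bound)
  have "cmod (\<Sum>m\<in>Ms. \<phi> m * complex_of_real (R ((\<beta> - real m) / \<alpha> - 1/\<alpha>) - R ((\<beta> - real m) / \<alpha>)))
      \<le> (\<Sum>m\<in>Ms. \<bar>R ((\<beta> - real m) / \<alpha> + (- 1/\<alpha>))\<bar> + \<bar>R ((\<beta> - real m) / \<alpha> + 0)\<bar>)"
  proof (rule order_trans[OF norm_sum sum_mono])
    fix m
    have "cmod (\<phi> m * complex_of_real (R ((\<beta> - real m) / \<alpha> - 1/\<alpha>) - R ((\<beta> - real m) / \<alpha>)))
        \<le> 1 * \<bar>R ((\<beta> - real m) / \<alpha> - 1/\<alpha>) - R ((\<beta> - real m) / \<alpha>)\<bar>"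
      unfolding norm_mult norm_of_real using \<phi> by (intro mult_right_mono) auto
    then show "cmod (\<phi> m * complex_of_real (R ((\<beta> - real m) / \<alpha> - 1/\<alpha>) - R ((\<beta> - real m) / \<alpha>)))
        \<le> \<bar>R ((\<beta> - real m) / \<alpha> + (- 1/\<alpha>))\<bar> + \<bar>R ((\<beta> - real m) / \<alpha> + 0)\<bar>"
      by simp
  qed
  also have "\<dots> \<le> (F (- 1/\<alpha>) + F 0) / (2 * L)"
    unfolding F_def add_divide_distrib sum_divide_distrib sum.distrib[symmetric]
    by (intro sum_mono add_mono R)
  also have "\<dots> \<le> (S + S) / (2 * L)"
    unfolding F_def S_def L_def
        using a by (intro divide_right_mono add_mono sum_fejer_shifts_le) auto
  also have "\<dots> = (1 / L) * S" by (simp add: L_def field_simps)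
  finally show ?thesis unfolding L_def S_def .
qed

section \<open>The Beatty sequence\<close>

text \<open>For \<open>\<alpha> \<ge> 1\<close> this is the indicator function of the values \<open>\<lfloor>n\<alpha> + \<beta>\<rfloor>\<close>,
  \<open>n \<in> \<int>\<close>.\<close>

definition beatty_indicator :: "real \<Rightarrow> real \<Rightarrow> nat \<Rightarrow> int" where
  "beatty_indicator \<alpha> \<beta> m = \<lfloor>(\<beta> - real m) / \<alpha>\<rfloor> - \<lfloor>(\<beta> - real m) / \<alpha> - 1/\<alpha>\<rfloor>"

lemma beatty_indicator_cases:
  assumes "\<alpha> \<ge> 1"
  shows "beatty_indicator \<alpha> \<beta> m = 0 \<or> beatty_indicator \<alpha> \<beta> m = 1"
proof -
  define x where "x = (\<beta> - real m) / \<alpha>"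
  have "0 < 1/\<alpha>" "1/\<alpha> \<le> 1" using assms by auto
  then have "\<lfloor>x - 1/\<alpha>\<rfloor> \<le> \<lfloor>x\<rfloor>" "\<lfloor>x - 1\<rfloor> \<le> \<lfloor>x - 1/\<alpha>\<rfloor>"
    by (intro floor_mono; simp)+
  then show ?thesis unfolding beatty_indicator_def x_def[symmetric] by linarith
qed

lemma beatty_indicator_eq_1_iff:
  assumes a: "\<alpha> \<ge> 1"
  shows "beatty_indicator \<alpha> \<beta> m = 1 \<longleftrightarrow> (\<exists>n::int. \<lfloor>of_int n * \<alpha> + \<beta>\<rfloor> = int m)"
proof -
  define x where "x = (\<beta> - real m) / \<alpha>"
  have a0: "\<alpha> > 0" using a by simp
  have x_ge: "of_int p \<le> x \<longleftrightarrow> real m \<le> of_int (- p) * \<alpha> + \<beta>" for p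
    unfolding x_def using a0 by (simp add: field_simps)
  have x_lt: "x - 1/\<alpha> < of_int p \<longleftrightarrow> of_int (- p) * \<alpha> + \<beta> < real m + 1" for p
  proof -
    have "x - 1/\<alpha> = (\<beta> - real m - 1) / \<alpha>" unfolding x_def by (simp add: diff_divide_distrib)
    then show ?thesis using a0 by (simp add: pos_divide_less_eq algebra_simps)
  qed
  show ?thesis
  proof
    assume "beatty_indicator \<alpha> \<beta> m = 1"
    then have "\<lfloor>x - 1/\<alpha>\<rfloor> = \<lfloor>x\<rfloor> - 1" unfolding beatty_indicator_def x_def by simp
    then have "x - 1/\<alpha> < of_int \<lfloor>x\<rfloor>" by (simp add: floor_eq_iff)
    then have "\<lfloor>of_int (- \<lfloor>x\<rfloor>) * \<alpha> + \<beta>\<rfloor> = int m"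
      using x_ge[of "\<lfloor>x\<rfloor>"] x_lt[of "\<lfloor>x\<rfloor>"] by (simp add: floor_eq_iff)
    then show "\<exists>n::int. \<lfloor>of_int n * \<alpha> + \<beta>\<rfloor> = int m" ..
  next
    assume "\<exists>n::int. \<lfloor>of_int n * \<alpha> + \<beta>\<rfloor> = int m"
    then obtain n :: int where "\<lfloor>of_int n * \<alpha> + \<beta>\<rfloor> = int m" ..
    then have "real m \<le> of_int n * \<alpha> + \<beta>" "of_int n * \<alpha> + \<beta> < real m + 1"
      by (simp_all add: floor_eq_iff)
    then have "of_int (- n) \<le> x" "x - 1/\<alpha> < of_int (- n)"
      using x_ge[of "- n"] x_lt[of "- n"] by simp_all
    then have "- n \<le> \<lfloor>x\<rfloor>" "\<lfloor>x - 1/\<alpha>\<rfloor> < - n" by (simp_all add: le_floor_iff floor_less_iff)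
    then have "beatty_indicator \<alpha> \<beta> m \<noteq> 0" unfolding beatty_indicator_def x_def by simp
    then show "beatty_indicator \<alpha> \<beta> m = 1" using beatty_indicator_cases[OF a] by blast
  qed
qed

lemma floor_affine_inj:
  fixes \<alpha> \<beta> :: real
  assumes "\<alpha> \<ge> 1" and "\<lfloor>of_int n * \<alpha> + \<beta>\<rfloor> = \<lfloor>of_int n' * \<alpha> + \<beta>\<rfloor>"
  shows "n = n'"
proof (rule ccontr)
  assume "n \<noteq> n'"
  then have "1 \<le> \<bar>real_of_int n - of_int n'\<bar>" by linarith
  also have "\<dots> \<le> \<bar>real_of_int n - of_int n'\<bar> * \<alpha>" using assms(1) by (simp add: mult_le_cancel_left1)
  also have "\<dots> = \<bar>(real_of_int n - of_int n') * \<alpha>\<bar>" using assms(1) by (simp add: abs_mult)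
  also have "\<dots> = \<bar>(of_int n * \<alpha> + \<beta>) - (of_int n' * \<alpha> + \<beta>)\<bar>" by (simp add: algebra_simps)
  finally show False using assms(2) by linarith
qed

lemma norm_beatty_sum_minus_indicator_sum_le:
  fixes \<phi> :: "nat \<Rightarrow> complex" and \<alpha> \<beta> K :: real
  assumes \<phi>: "\<forall>m. cmod (\<phi> m) \<le> 1" and a: "\<alpha> \<ge> 1" and b: "\<beta> \<ge> 0"
  defines "Ns \<equiv> {n::nat. 0 < n \<and> real n \<le> K}"
    and "Ms \<equiv> {m::nat. \<beta> < real m \<and> real m \<le> \<beta> + K * \<alpha>}"
  shows "cmod ((\<Sum>n\<in>Ns. \<phi> (nat \<lfloor>real n * \<alpha> + \<beta>\<rfloor>))
     - (\<Sum>m\<in>Ms. \<phi> m * of_int (beatty_indicator \<alpha> \<beta> m))) \<le> 1"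
proof -
  define f where "f n = nat \<lfloor>real n * \<alpha> + \<beta>\<rfloor>" for n :: nat
  define Mh where "Mh = {m\<in>Ms. beatty_indicator \<alpha> \<beta> m = 1}"
  define D where "D = Mh - f ` Ns"
  have finM: "finite Ms" unfolding Ms_def
    by (rule finite_subset[of _ "{..nat \<lceil>\<beta> + K * \<alpha>\<rceil>}"]) (auto simp: le_nat_iff le_ceiling_iff)
  have f_floor: "\<lfloor>of_int (int n) * \<alpha> + \<beta>\<rfloor> = int (f n)" for n
    unfolding f_def using a b by simp
  have f_Mh: "f n \<in> Mh" if n: "n \<in> Ns" for n
  proof -
    have "1 \<le> real n" "real n \<le> K" using n unfolding Ns_def by auto
    then have "\<alpha> \<le> real n * \<alpha>" "real n * \<alpha> \<le> K * \<alpha>" using a by (auto intro: mult_right_mono)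
    moreover have "real n * \<alpha> + \<beta> - 1 < real (f n)" "real (f n) \<le> real n * \<alpha> + \<beta>"
      using f_floor[of n] by linarith+
    ultimately have "\<beta> < real (f n)" "real (f n) \<le> \<beta> + K * \<alpha>" using a by linarith+
    then have "f n \<in> Ms" unfolding Ms_def by simp
    then show ?thesis unfolding Mh_def using beatty_indicator_eq_1_iff[OF a] f_floor by blast
  qed
  have inj: "inj_on f Ns"
    by (rule inj_onI) (metis f_floor floor_affine_inj[OF a] of_nat_eq_iff of_int_of_nat_eq)
  have D_witness: "\<exists>n::int. K < of_int n \<and> of_int n < K + 1 \<and> \<lfloor>of_int n * \<alpha> + \<beta>\<rfloor> = int m"
    if m: "m \<in> D" for m
  proof -
    from m obtain n :: int where n: "\<lfloor>of_int n * \<alpha> + \<beta>\<rfloor> = int m"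
      using beatty_indicator_eq_1_iff[OF a] unfolding D_def Mh_def by blast
    then have n_bounds: "real m \<le> of_int n * \<alpha> + \<beta>" "of_int n * \<alpha> + \<beta> < real m + 1"
      by (simp_all add: floor_eq_iff)
    have m_bounds: "\<beta> < real m" "real m \<le> \<beta> + K * \<alpha>" using m unfolding D_def Mh_def Ms_def by auto
    then have "0 < of_int n * \<alpha>" using n_bounds by linarith
    then have n0: "0 < n" using a by (simp add: zero_less_mult_iff)
    have "(of_int n - K) * \<alpha> < 1" using n_bounds m_bounds by (simp add: algebra_simps)
    then have "of_int n - K < 1" using a by (smt (verit) mult_le_cancel_left1 mult.commute)
    moreover have "K < of_int n"
    proof (rule ccontr)
      assume "\<not> K < of_int n"
      then have "nat n \<in> Ns" unfolding Ns_def using n0 by simp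
      moreover have "f (nat n) = m" using f_floor[of "nat n"] n n0 by simp
      ultimately show False using m unfolding D_def by auto
    qed
    ultimately show ?thesis using n by auto
  qed
  have "card D \<le> 1"
  proof -
    have "m = m'" if mD: "m \<in> D" and m'D: "m' \<in> D" for m m'
    proof -
      obtain n where n: "K < of_int n" "of_int n < K + 1" "\<lfloor>of_int n * \<alpha> + \<beta>\<rfloor> = int m"
        using D_witness[OF mD] by blast
      obtain n' where n': "K < of_int n'" "of_int n' < K + 1" "\<lfloor>of_int n' * \<alpha> + \<beta>\<rfloor> = int m'"
        using D_witness[OF m'D] by blast
      have "n = n'" using n n' by linarith
      then show ?thesis using n(3) n'(3) by simp
    qed
    then show ?thesis using finM by (auto simp: D_def Mh_def card_le_Suc0_iff_eq)
  qed
  have "(\<Sum>m\<in>Ms. \<phi> m * of_int (beatty_indicator \<alpha> \<beta> m)) = (\<Sum>m\<in>Mh. \<phi> m)"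
  proof -
    have "(\<Sum>m\<in>Ms. \<phi> m * of_int (beatty_indicator \<alpha> \<beta> m))
        = (\<Sum>m\<in>Ms. if beatty_indicator \<alpha> \<beta> m = 1 then \<phi> m else 0)"
      by (intro sum.cong refl) (use beatty_indicator_cases[OF a] in force)
    then show ?thesis unfolding Mh_def using finM by (simp add: sum.inter_filter)
  qed
  also have "\<dots> = (\<Sum>m\<in>D. \<phi> m) + (\<Sum>n\<in>Ns. \<phi> (f n))"
    using sum.subset_diff[of "f ` Ns" Mh \<phi>] f_Mh finM sum.reindex[OF inj, of \<phi>]
    unfolding D_def Mh_def by (auto simp: image_subset_iff)
  finally have "cmod ((\<Sum>n\<in>Ns. \<phi> (f n)) - (\<Sum>m\<in>Ms. \<phi> m * of_int (beatty_indicator \<alpha> \<beta> m)))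
      = cmod (\<Sum>m\<in>D. \<phi> m)"
    by (simp add: norm_minus_commute)
  also have "\<dots> \<le> (\<Sum>m\<in>D. 1)" using \<phi> by (intro order_trans[OF norm_sum] sum_mono) auto
  also have "\<dots> \<le> 1" using \<open>card D \<le> 1\<close> by simp
  finally show ?thesis unfolding f_def .
qed

lemma sum_indicator_minus_mean_eq:
  assumes "\<alpha> \<noteq> 0"
  shows "(\<Sum>m\<in>Ms. \<phi> m * of_int (beatty_indicator \<alpha> \<beta> m)) - (1 / complex_of_real \<alpha>) * (\<Sum>m\<in>Ms. \<phi> m)
    = (\<Sum>m\<in>Ms. \<phi> m * complex_of_real
          (vaaler N ((\<beta> - real m) / \<alpha> - 1/\<alpha>) - vaaler N ((\<beta> - real m) / \<alpha>)))
    + (\<Sum>m\<in>Ms. \<phi> m * complex_of_real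
          ((sawtooth ((\<beta> - real m) / \<alpha> - 1/\<alpha>) - vaaler N ((\<beta> - real m) / \<alpha> - 1/\<alpha>))
           - (sawtooth ((\<beta> - real m) / \<alpha>) - vaaler N ((\<beta> - real m) / \<alpha>))))"
proof -
  have "(1 / complex_of_real \<alpha>) * (\<Sum>m\<in>Ms. \<phi> m) = (\<Sum>m\<in>Ms. \<phi> m * complex_of_real (1/\<alpha>))"
    by (simp add: sum_divide_distrib)
  then have "(\<Sum>m\<in>Ms. \<phi> m * of_int (beatty_indicator \<alpha> \<beta> m)) - (1 / complex_of_real \<alpha>) * (\<Sum>m\<in>Ms. \<phi> m)
      = (\<Sum>m\<in>Ms. \<phi> m * complex_of_real (real_of_int (beatty_indicator \<alpha> \<beta> m) - 1/\<alpha>))"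
    by (simp add: sum_subtractf[symmetric] algebra_simps)
  also have "\<dots> = (\<Sum>m\<in>Ms. \<phi> m * complex_of_real
          (sawtooth ((\<beta> - real m) / \<alpha> - 1/\<alpha>) - sawtooth ((\<beta> - real m) / \<alpha>)))"
    unfolding sawtooth_diff_eq beatty_indicator_def ..
  finally show ?thesis by (simp add: sum.distrib[symmetric] algebra_simps)
qed

theorem beatty_exponential_sum_bound:
  fixes \<phi> :: "nat \<Rightarrow> complex" and \<alpha> \<beta> K H :: real
  assumes \<phi>: "\<forall>m. cmod (\<phi> m) \<le> 1" and a: "\<alpha> \<ge> 1" and b: "\<beta> \<ge> 0" and H: "H \<ge> 1"
  defines "Ms \<equiv> {m::nat. \<beta> < real m \<and> real m \<le> \<beta> + K * \<alpha>}"
  shows "cmod ((\<Sum>n\<in>{n::nat. 0 < n \<and> real n \<le> K}. \<phi> (nat \<lfloor>real n * \<alpha> + \<beta>\<rfloor>))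
          - (1 / complex_of_real \<alpha>) * (\<Sum>m\<in>Ms. \<phi> m))
    \<le> (\<Sum>h\<in>{h::int. 1 \<le> \<bar>h\<bar> \<and> real_of_int \<bar>h\<bar> \<le> H}.
          min (1 / \<alpha>) (1 / real_of_int \<bar>h\<bar>) * cmod (\<Sum>m\<in>Ms. \<phi> m * e (- real m
              * (real_of_int h / \<alpha>))))
      + (1 / H) * (\<Sum>h\<in>{h::int. 0 \<le> \<bar>h\<bar> \<and> real_of_int \<bar>h\<bar> \<le> H}.
          cmod (\<Sum>m\<in>Ms. e (- real m * (real_of_int h / \<alpha>))))
      + 1"
proof -
  define N where "N = nat \<lfloor>H\<rfloor>"
  define X where "X = (\<Sum>n\<in>{n::nat. 0 < n \<and> real n \<le> K}. \<phi> (nat \<lfloor>real n * \<alpha> + \<beta>\<rfloor>))"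
  define Z where "Z = (\<Sum>m\<in>Ms. \<phi> m * of_int (beatty_indicator \<alpha> \<beta> m))"
  define S where "S = (\<Sum>h\<in>{- int N..int N}. cmod (\<Sum>m\<in>Ms. e (- real m * (real_of_int h / \<alpha>))))"
  have "\<lfloor>H\<rfloor> = int N" unfolding N_def using H by simp
  then have hH: "real_of_int \<bar>h\<bar> \<le> H \<longleftrightarrow> \<bar>h\<bar> \<le> int N" for h :: int
    using le_floor_iff[of "\<bar>h\<bar>" H] by simp
  have H1: "{h::int. 1 \<le> \<bar>h\<bar> \<and> real_of_int \<bar>h\<bar> \<le> H} = {- int N..int N} - {0}"
    and H0: "{h::int. 0 \<le> \<bar>h\<bar> \<and> real_of_int \<bar>h\<bar> \<le> H} = {- int N..int N}"
    unfolding hH by auto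
  have "H < real (Suc N)" unfolding N_def using H by linarith
  then have "(1 / real (Suc N)) * S \<le> (1 / H) * S"
    unfolding S_def using H by (intro mult_right_mono divide_left_mono sum_nonneg) auto
  moreover have "cmod (X - Z) \<le> 1"
    unfolding X_def Z_def Ms_def by (rule norm_beatty_sum_minus_indicator_sum_le[OF \<phi> a b])
  moreover have "cmod (Z - (1 / complex_of_real \<alpha>) * (\<Sum>m\<in>Ms. \<phi> m))
      \<le> (\<Sum>h\<in>{- int N..int N} - {0}. min (1 / \<alpha>) (1 / real_of_int \<bar>h\<bar>)
           * cmod (\<Sum>m\<in>Ms. \<phi> m * e (- real m * (of_int h / \<alpha>))))
        + (1 / real (Suc N)) * S"
  proof -
    have "\<alpha> \<noteq> 0" using a by simp
    then show ?thesis
      unfolding Z_def sum_indicator_minus_mean_eq[OF \<open>\<alpha> \<noteq> 0\<close>, where N=N] S_def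
      by (intro order_trans[OF norm_triangle_ineq] add_mono norm_sum_vaaler_differences_le[OF a]
          norm_sum_vaaler_error_differences_le[OF \<phi>])
  qed
  ultimately show ?thesis
    unfolding H1 H0 X_def[symmetric] S_def
    using norm_triangle_ineq[of "X - Z" "Z - (1 / complex_of_real \<alpha>) * (\<Sum>m\<in>Ms. \<phi> m)"] by simp
qed

theorem proposition5:
  shows "\<exists>C::real. \<forall>(\<phi>::nat \<Rightarrow> complex) (\<alpha>::real) (\<beta>::real) (K::real) (H::real).
    (\<forall>m. cmod (\<phi> m) \<le> 1) \<and> \<alpha> \<ge> 1 \<and> \<beta> \<ge> 0 \<and> K \<ge> 0 \<and> H \<ge> 1 \<longrightarrow>
    cmod ((\<Sum>n\<in>{n::nat. 0 < n \<and> real n \<le> K}. \<phi> (nat \<lfloor>real n * \<alpha> + \<beta>\<rfloor>))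
          - (1 / complex_of_real \<alpha>) * (\<Sum>m\<in>{m::nat. \<beta> < real m \<and> real m \<le> \<beta> + K * \<alpha>}. \<phi> m))
    \<le> (\<Sum>h\<in>{h::int. 1 \<le> \<bar>h\<bar> \<and> real_of_int \<bar>h\<bar> \<le> H}.
          min (1 / \<alpha>) (1 / real_of_int \<bar>h\<bar>) *
          cmod (\<Sum>m\<in>{m::nat. \<beta> < real m \<and> real m \<le> \<beta> + K * \<alpha>}.
                  \<phi> m * e (- real m * (real_of_int h / \<alpha>))))
      + (1 / H) * (\<Sum>h\<in>{h::int. 0 \<le> \<bar>h\<bar> \<and> real_of_int \<bar>h\<bar> \<le> H}.
          cmod (\<Sum>m\<in>{m::nat. \<beta> < real m \<and> real m \<le> \<beta> + K * \<alpha>}.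
                  e (- real m * (real_of_int h / \<alpha>))))
      + C"
  by (intro exI[of _ 1] allI impI) (elim conjE, rule beatty_exponential_sum_bound)

end
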